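(* Let $Q=\tau(t)\partial_t+\xi(x)\partial_x+[h(t)u+r(t,x)]\partial_u$ be a nonzero vector field, with $\tau,\xi,h,r$ smooth. Then there is a change of variables of the form $\bar t=T(t)$, $\bar x=X(x)$, $v=U(t)u+Y(t,x)$ with $T'X'U\neq0$, or of the form $\bar t=T(x)$, $\bar x=X(t)$, $v=\Psi(x)\Phi(t,x)u+Y(t,x)$ with $T'X'\Psi\neq0$ and $\Phi(t,x)=\exp[-\int g(t,x)\,dt]$ for a given smooth function $g$ with $g_x\neq0$, which transforms $Q$ into one of the following operators (written in the new variables, still denoted $t,x,u$): $$t\partial_t+x\partial_x;\quad \partial_t;\quad \partial_x+tu\partial_u;\quad \partial_x+\epsilon u\partial_u\ (\epsilon=0,1);\quad tu\partial_u;\quad u\partial_u;\quad r(t,x)\partial_u\ \ (r\neq0).$$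
   Context: These changes of variables form the equivalence group of the class of equations $u_{tx}=g(t,x)u_x+f(t,x,u)$ ($g_x\neq0$, $f_{uu}\neq0$), and vector fields of the given form are the Lie point symmetry generators of equations in this class. All considerations are local. *)

theory Defs
  imports "HOL-Analysis.Analysis"
begin

type_synonym R3 = "real \<times> real \<times> real"

definition smooth1 :: "real set \<Rightarrow> (real \<Rightarrow> real) \<Rightarrow> bool" where
  "smooth1 S f \<longleftrightarrow>
     (\<forall>n. \<forall>x\<in>S. ((deriv ^^ n) f has_real_derivative (deriv ^^ Suc n) f x) (at x))"

fun Ck2 :: "nat \<Rightarrow> (real \<times> real) set \<Rightarrow> (real \<times> real \<Rightarrow> real) \<Rightarrow> bool" where
  "Ck2 0 S f = continuous_on S f"
| "Ck2 (Suc k) S f =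
     (\<exists>f1 f2. (\<forall>p\<in>S. (f has_derivative (\<lambda>(a, b). a * f1 p + b * f2 p)) (at p))
              \<and> Ck2 k S f1 \<and> Ck2 k S f2)"

definition smooth2 :: "(real \<times> real) set \<Rightarrow> (real \<times> real \<Rightarrow> real) \<Rightarrow> bool" where
  "smooth2 S f \<longleftrightarrow> (\<forall>k. Ck2 k S f)"

definition pd_t :: "(real \<times> real \<Rightarrow> real) \<Rightarrow> real \<times> real \<Rightarrow> real" where
  "pd_t f p = deriv (\<lambda>s. f (s, snd p)) (fst p)"

definition pd_x :: "(real \<times> real \<Rightarrow> real) \<Rightarrow> real \<times> real \<Rightarrow> real" where
  "pd_x f p = deriv (\<lambda>s. f (fst p, s)) (snd p)"

definition Qfield :: "(real \<Rightarrow> real) \<Rightarrow> (real \<Rightarrow> real) \<Rightarrow> (real \<Rightarrow> real)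
                     \<Rightarrow> (real \<times> real \<Rightarrow> real) \<Rightarrow> R3 \<Rightarrow> R3" where
  "Qfield \<tau> \<xi> h r = (\<lambda>(t, x, u). (\<tau> t, \<xi> x, h t * u + r (t, x)))"

definition pushes_to :: "(R3 \<Rightarrow> R3) \<Rightarrow> R3 set \<Rightarrow> (R3 \<Rightarrow> R3) \<Rightarrow> (R3 \<Rightarrow> R3) \<Rightarrow> bool" where
  "pushes_to \<phi> V Q P \<longleftrightarrow>
     (\<forall>p\<in>V. \<exists>D. (\<phi> has_derivative D) (at p) \<and> D (Q p) = P (\<phi> p))"

definition cv_first :: "real set \<Rightarrow> real set \<Rightarrow> (R3 \<Rightarrow> R3) \<Rightarrow> bool" where
  "cv_first I J \<phi> \<longleftrightarrow>
     (\<exists>T X U Y. smooth1 I T \<and> smooth1 J X \<and> smooth1 I U \<and> smooth2 (I \<times> J) Y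
        \<and> (\<forall>t\<in>I. deriv T t \<noteq> 0 \<and> U t \<noteq> 0) \<and> (\<forall>x\<in>J. deriv X x \<noteq> 0)
        \<and> \<phi> = (\<lambda>(t, x, u). (T t, X x, U t * u + Y (t, x))))"

text \<open>Changes of variables of the second kind on the box I x J x R:
  tbar = T(x), xbar = X(t), v = Psi(x) Phi(t,x) u + Y(t,x), with T' X' Psi nonzero and
  Phi = exp(- integral g dt), i.e. Phi = exp G with G_t = - g.\<close>
definition cv_second :: "(real \<times> real \<Rightarrow> real) \<Rightarrow> real set \<Rightarrow> real set \<Rightarrow> (R3 \<Rightarrow> R3) \<Rightarrow> bool" where
  "cv_second g I J \<phi> \<longleftrightarrow>
     (\<exists>T X \<Psi> G Y. smooth1 J T \<and> smooth1 I X \<and> smooth1 J \<Psi> \<and> smooth2 (I \<times> J) G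
        \<and> smooth2 (I \<times> J) Y
        \<and> (\<forall>p\<in>I \<times> J. pd_t G p = - g p)
        \<and> (\<forall>x\<in>J. deriv T x \<noteq> 0 \<and> \<Psi> x \<noteq> 0) \<and> (\<forall>t\<in>I. deriv X t \<noteq> 0)
        \<and> \<phi> = (\<lambda>(t, x, u). (T x, X t, \<Psi> x * exp (G (t, x)) * u + Y (t, x))))"

text \<open>The last family r(t,x) d_u is handled separately in the theorem,
  since the condition r \<noteq> 0 refers to the domain.\<close>
definition canonical_list :: "(R3 \<Rightarrow> R3) set" where
  "canonical_list =
     {(\<lambda>(t, x, u). (t, x, 0)),
      (\<lambda>(t, x, u). (1, 0, 0)),
      (\<lambda>(t, x, u). (0, 1, t * u)),
      (\<lambda>(t, x, u). (0, 1, 0)),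
      (\<lambda>(t, x, u). (0, 1, u)),
      (\<lambda>(t, x, u). (0, 0, t * u)),
      (\<lambda>(t, x, u). (0, 0, u))}"

end

(*
  Work near a point where Q does not vanish and split according to which of \<tau>, \<xi>, h vanish
  identically near it; by continuity a coefficient that does not vanish identically is nonzero
  on a whole ball.  A change of the first kind maps Q to
    (T' \<tau>, X' \<xi>, U' \<tau> u + U (h u + r) + \<tau> Y_t + \<xi> Y_x).
  Where \<tau> and \<xi> are nonzero, T' = T/\<tau>, X' = X/\<xi> and U' = -h U/\<tau> (exponentials of
  primitives) turn the first two components into t and x and the coefficient of u into 0; the
  term U r is then removed by solving the transport equation \<tau> Y_t + \<xi> Y_x = -U r along the
  characteristics B(x) - A(t) = const, A' = 1/\<tau>, B' = 1/\<xi>.  The degenerate cases are simpler: one solves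
  \<tau> Y_t = -U r, the linear equation \<xi> Y_x = h Y - r (integrating factor exp(h B)), or takes
  Y = r/h; and t is reparametrised by T so that h(t) becomes c T(t), 0 or c for a constant c.
*)
theory Submission
  imports Defs
begin

section \<open>Smooth functions of one and two variables\<close>

lemma Ck2_SucI:
  assumes "\<And>p. p \<in> S \<Longrightarrow> (f has_derivative (\<lambda>(a, b). a * da p + b * db p)) (at p)"
    and "Ck2 k S da" "Ck2 k S db"
  shows "Ck2 (Suc k) S f"
  unfolding Ck2.simps using assms by blast

lemma Ck2_SucD: "Ck2 (Suc k) S f \<Longrightarrow> Ck2 k S f"
proof (induction k arbitrary: f)
  case 0
  then obtain da db where d: "\<forall>p\<in>S. (f has_derivative (\<lambda>(a, b). a * da p + b * db p)) (at p)"
    by auto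
  show ?case
    using d by (auto intro!: continuous_at_imp_continuous_on has_derivative_continuous)
next
  case (Suc k)
  from Suc.prems obtain da db where
    d: "\<forall>p\<in>S. (f has_derivative (\<lambda>(a, b). a * da p + b * db p)) (at p)"
    and c: "Ck2 (Suc k) S da" "Ck2 (Suc k) S db"
    by auto
  show ?case using d Suc.IH[OF c(1)] Suc.IH[OF c(2)] by auto
qed

lemma Ck2_antimono: "k \<le> m \<Longrightarrow> Ck2 m S f \<Longrightarrow> Ck2 k S f"
proof (induction m)
  case (Suc m)
  then show ?case by (metis Ck2_SucD le_Suc_eq)
qed simp

lemma Ck2_subset: "S' \<subseteq> S \<Longrightarrow> Ck2 k S f \<Longrightarrow> Ck2 k S' f"
proof (induction k arbitrary: f)
  case (Suc k)
  from Suc.prems(2) obtain da db where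
    d: "\<forall>p\<in>S. (f has_derivative (\<lambda>(a, b). a * da p + b * db p)) (at p)"
    and c: "Ck2 k S da" "Ck2 k S db"
    by auto
  show ?case
    by (rule Ck2_SucI[OF _ Suc.IH[OF Suc.prems(1) c(1)] Suc.IH[OF Suc.prems(1) c(2)]])
      (use d Suc.prems(1) in auto)
qed (auto intro: continuous_on_subset)

lemma Ck2_cong:
  assumes "open S" "\<And>p. p \<in> S \<Longrightarrow> f p = g p" "Ck2 k S f"
  shows "Ck2 k S g"
  using assms(2,3)
proof (induction k arbitrary: f g)
  case 0
  then show ?case using continuous_on_cong by (metis Ck2.simps(1))
next
  case (Suc k)
  then obtain da db where
    d: "\<forall>p\<in>S. (f has_derivative (\<lambda>(a, b). a * da p + b * db p)) (at p)"
    and "Ck2 k S da" "Ck2 k S db"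
    by auto
  show ?case
  proof (rule Ck2_SucI[OF _ \<open>Ck2 k S da\<close> \<open>Ck2 k S db\<close>])
    fix p assume "p \<in> S"
    with d show "(g has_derivative (\<lambda>(a, b). a * da p + b * db p)) (at p)"
      by (intro has_derivative_transform_within_open[OF _ assms(1) _ Suc.prems(1)]) auto
  qed
qed

lemma Ck2_const: "Ck2 k S (\<lambda>_. c)"
proof (induction k arbitrary: c)
  case (Suc k)
  show ?case
    by (rule Ck2_SucI[where da = "\<lambda>_. 0" and db = "\<lambda>_. 0", OF _ Suc.IH Suc.IH],
        rule has_derivative_eq_rhs[OF has_derivative_const]) (auto simp: fun_eq_iff)
qed simp

lemma Ck2_fst: "Ck2 k S fst"
proof (cases k)
  case (Suc m)
  show ?thesis unfolding Suc
    by (rule Ck2_SucI[where da = "\<lambda>_. 1" and db = "\<lambda>_. 0", OF _ Ck2_const Ck2_const],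
        rule has_derivative_eq_rhs[OF has_derivative_fst[OF has_derivative_ident]]) auto
qed (simp add: continuous_on_fst)

lemma Ck2_snd: "Ck2 k S snd"
proof (cases k)
  case (Suc m)
  show ?thesis unfolding Suc
    by (rule Ck2_SucI[where da = "\<lambda>_. 0" and db = "\<lambda>_. 1", OF _ Ck2_const Ck2_const],
        rule has_derivative_eq_rhs[OF has_derivative_snd[OF has_derivative_ident]]) auto
qed (simp add: continuous_on_snd)

lemma Ck2_add:
  assumes "Ck2 k S f" "Ck2 k S g"
  shows "Ck2 k S (\<lambda>p. f p + g p)"
  using assms
proof (induction k arbitrary: f g)
  case 0
  then show ?case by (auto intro: continuous_on_add)
next
  case (Suc k)
  from Suc.prems(1) obtain da db where
    df: "\<forall>p\<in>S. (f has_derivative (\<lambda>(a, b). a * da p + b * db p)) (at p)"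
    and cf: "Ck2 k S da" "Ck2 k S db" by auto
  from Suc.prems(2) obtain g1 g2 where
    dg: "\<forall>p\<in>S. (g has_derivative (\<lambda>(a, b). a * g1 p + b * g2 p)) (at p)"
    and cg: "Ck2 k S g1" "Ck2 k S g2" by auto
  have "((\<lambda>p. f p + g p) has_derivative
        (\<lambda>(a, b). a * (da p + g1 p) + b * (db p + g2 p))) (at p)" if "p \<in> S" for p
  proof -
    have "(f has_derivative (\<lambda>(a, b). a * da p + b * db p)) (at p)"
      "(g has_derivative (\<lambda>(a, b). a * g1 p + b * g2 p)) (at p)" using df dg that by auto
    from has_derivative_add[OF this] show ?thesis
      by (rule has_derivative_eq_rhs) (auto simp: fun_eq_iff algebra_simps)
  qed
  then show ?case
    by (rule Ck2_SucI[OF _ Suc.IH[OF cf(1) cg(1)] Suc.IH[OF cf(2) cg(2)]])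
qed

lemma Ck2_mult:
  assumes "Ck2 k S f" "Ck2 k S g"
  shows "Ck2 k S (\<lambda>p. f p * g p)"
  using assms
proof (induction k arbitrary: f g)
  case 0
  then show ?case by (auto intro: continuous_on_mult)
next
  case (Suc k)
  from Suc.prems(1) obtain da db where
    df: "\<forall>p\<in>S. (f has_derivative (\<lambda>(a, b). a * da p + b * db p)) (at p)"
    and cf: "Ck2 k S da" "Ck2 k S db" by auto
  from Suc.prems(2) obtain g1 g2 where
    dg: "\<forall>p\<in>S. (g has_derivative (\<lambda>(a, b). a * g1 p + b * g2 p)) (at p)"
    and cg: "Ck2 k S g1" "Ck2 k S g2" by auto
  have f: "Ck2 k S f" and g: "Ck2 k S g"
    using Ck2_SucD[OF Suc.prems(1)] Ck2_SucD[OF Suc.prems(2)] .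
  have "((\<lambda>p. f p * g p) has_derivative
        (\<lambda>(a, b). a * (f p * g1 p + da p * g p) + b * (f p * g2 p + db p * g p))) (at p)"
    if "p \<in> S" for p
  proof -
    have "(f has_derivative (\<lambda>(a, b). a * da p + b * db p)) (at p)"
      "(g has_derivative (\<lambda>(a, b). a * g1 p + b * g2 p)) (at p)" using df dg that by auto
    from has_derivative_mult[OF this] show ?thesis
      by (rule has_derivative_eq_rhs) (auto simp: fun_eq_iff algebra_simps)
  qed
  then show ?case
    by (rule Ck2_SucI[OF _ Ck2_add[OF Suc.IH[OF f cg(1)] Suc.IH[OF cf(1) g]]
          Ck2_add[OF Suc.IH[OF f cg(2)] Suc.IH[OF cf(2) g]]])
qed

lemma Ck2_comp:
  assumes "Ck2 k S F" "Ck2 k S' p" "Ck2 k S' q" "\<And>z. z \<in> S' \<Longrightarrow> (p z, q z) \<in> S"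
  shows "Ck2 k S' (\<lambda>z. F (p z, q z))"
  using assms
proof (induction k arbitrary: F p q)
  case 0
  have "continuous_on S' (\<lambda>z. (p z, q z))" using 0 by (auto intro: continuous_on_Pair)
  with 0 show ?case
    by (auto intro!: continuous_on_compose2[of S F S' "\<lambda>z. (p z, q z)"])
next
  case (Suc k)
  from Suc.prems(1) obtain F1 F2 where
    dF: "\<forall>w\<in>S. (F has_derivative (\<lambda>(a, b). a * F1 w + b * F2 w)) (at w)"
    and cF: "Ck2 k S F1" "Ck2 k S F2" by auto
  from Suc.prems(2) obtain p1 p2 where
    dp: "\<forall>z\<in>S'. (p has_derivative (\<lambda>(a, b). a * p1 z + b * p2 z)) (at z)"
    and cp: "Ck2 k S' p1" "Ck2 k S' p2" by auto
  from Suc.prems(3) obtain q1 q2 where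
    dq: "\<forall>z\<in>S'. (q has_derivative (\<lambda>(a, b). a * q1 z + b * q2 z)) (at z)"
    and cq: "Ck2 k S' q1" "Ck2 k S' q2" by auto
  have p0: "Ck2 k S' p" and q0: "Ck2 k S' q"
    using Ck2_SucD[OF Suc.prems(2)] Ck2_SucD[OF Suc.prems(3)] .
  have "((\<lambda>z. F (p z, q z)) has_derivative
        (\<lambda>(a, b). a * (F1 (p z, q z) * p1 z + F2 (p z, q z) * q1 z)
                + b * (F1 (p z, q z) * p2 z + F2 (p z, q z) * q2 z))) (at z)" if z: "z \<in> S'" for z
  proof -
    have "((\<lambda>z. (p z, q z)) has_derivative
        (\<lambda>v. ((\<lambda>(a, b). a * p1 z + b * p2 z) v, (\<lambda>(a, b). a * q1 z + b * q2 z) v))) (at z)"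
      using dp dq z by (intro has_derivative_Pair) auto
    from has_derivative_compose[OF this dF[rule_format, OF Suc.prems(4)[OF z]]] show ?thesis
      by (rule has_derivative_eq_rhs) (simp add: fun_eq_iff split_beta algebra_simps)
  qed
  moreover have F1: "Ck2 k S' (\<lambda>z. F1 (p z, q z))" and F2: "Ck2 k S' (\<lambda>z. F2 (p z, q z))"
    using Suc.IH[OF cF(1) p0 q0 Suc.prems(4)] Suc.IH[OF cF(2) p0 q0 Suc.prems(4)] by blast+
  ultimately show ?case
    by (intro Ck2_SucI[OF _ Ck2_add[OF Ck2_mult[OF F1 cp(1)] Ck2_mult[OF F2 cq(1)]]
          Ck2_add[OF Ck2_mult[OF F1 cp(2)] Ck2_mult[OF F2 cq(2)]]])
qed

lemma Ck2_inverse_fst: "Ck2 k {z. fst z \<noteq> 0} (\<lambda>z. inverse (fst z))"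
proof (induction k)
  case (Suc k)
  have "((\<lambda>z. inverse (fst z)) has_derivative
      (\<lambda>(a, b). a * (- 1 * (inverse (fst z) * inverse (fst z))) + b * 0)) (at z)"
    if "z \<in> {z. fst z \<noteq> 0}" for z :: "real \<times> real"
  proof -
    from Deriv.has_derivative_inverse[OF _ has_derivative_fst[OF has_derivative_ident], of z] that
    show ?thesis by (rule_tac has_derivative_eq_rhs) (auto simp: fun_eq_iff)
  qed
  then show ?case
    by (rule Ck2_SucI[OF _ Ck2_mult[OF Ck2_const Ck2_mult[OF Suc.IH Suc.IH]] Ck2_const])
qed (simp add: continuous_on_inverse continuous_on_fst)

lemma smooth1_has_real_derivative:
  "smooth1 S f \<Longrightarrow> x \<in> S \<Longrightarrow> (f has_real_derivative deriv f x) (at x)"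
  unfolding smooth1_def by (drule spec[of _ 0]) simp

lemma smooth1_continuous_on: "smooth1 S f \<Longrightarrow> continuous_on S f"
  by (auto intro!: continuous_at_imp_continuous_on DERIV_isCont dest: smooth1_has_real_derivative)

lemma smooth1_subset: "smooth1 V f \<Longrightarrow> W \<subseteq> V \<Longrightarrow> smooth1 W f"
  unfolding smooth1_def by blast

lemma funpow_deriv_Suc: "(deriv ^^ Suc n) f = (deriv ^^ n) (deriv f)"
  by (simp only: funpow_Suc_right o_apply)

lemma smooth1_deriv: "smooth1 S f \<Longrightarrow> smooth1 S (deriv f)"
  unfolding smooth1_def by (simp only: funpow_deriv_Suc[symmetric]) blast

lemma has_derivative_partial_t:
  assumes "(f has_derivative (\<lambda>(a, b). a * A + b * B)) (at (x, y))"
  shows "((\<lambda>s. f (s, y)) has_real_derivative A) (at x)"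
proof -
  have "((\<lambda>s. (s, y)) has_derivative (\<lambda>h. (h, 0))) (at x)"
    by (rule has_derivative_Pair[OF has_derivative_ident has_derivative_const])
  from has_derivative_compose[OF this assms] show ?thesis
    unfolding has_field_derivative_def by (rule has_derivative_eq_rhs) (auto simp: fun_eq_iff)
qed

lemma has_derivative_partial_x:
  assumes "(f has_derivative (\<lambda>(a, b). a * A + b * B)) (at (x, y))"
  shows "((\<lambda>s. f (x, s)) has_real_derivative B) (at y)"
proof -
  have "((\<lambda>s. (x, s)) has_derivative (\<lambda>h. (0, h))) (at y)"
    by (rule has_derivative_Pair[OF has_derivative_const has_derivative_ident])
  from has_derivative_compose[OF this assms] show ?thesis
    unfolding has_field_derivative_def by (rule has_derivative_eq_rhs) (auto simp: fun_eq_iff)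
qed

lemma pd_t_eqI: "(f has_derivative (\<lambda>(a, b). a * A + b * B)) (at (x, y)) \<Longrightarrow> pd_t f (x, y) = A"
  unfolding pd_t_def by (simp add: DERIV_imp_deriv[OF has_derivative_partial_t])

lemma pd_x_eqI: "(f has_derivative (\<lambda>(a, b). a * A + b * B)) (at (x, y)) \<Longrightarrow> pd_x f (x, y) = B"
  unfolding pd_x_def by (simp add: DERIV_imp_deriv[OF has_derivative_partial_x])

lemma smooth2_has_derivative:
  assumes "smooth2 S f" "p \<in> S"
  shows "(f has_derivative (\<lambda>(a, b). a * pd_t f p + b * pd_x f p)) (at p)"
proof -
  from assms(1) have "Ck2 (Suc 0) S f" unfolding smooth2_def by blast
  then obtain da db where
    d: "\<forall>p\<in>S. (f has_derivative (\<lambda>(a, b). a * da p + b * db p)) (at p)" by auto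
  obtain x y where p: "p = (x, y)" by fastforce
  with d assms(2) have "(f has_derivative (\<lambda>(a, b). a * da p + b * db p)) (at (x, y))"
    by auto
  with p show ?thesis by (simp add: pd_t_eqI pd_x_eqI)
qed

lemma smooth1_imp_Ck2_fst: "smooth1 V \<phi> \<Longrightarrow> Ck2 k (V \<times> UNIV) (\<lambda>z. \<phi> (fst z))"
proof (induction k arbitrary: \<phi>)
  case 0
  have "continuous_on (V \<times> UNIV) (\<lambda>z. \<phi> (fst z))"
    by (rule continuous_on_compose2[OF smooth1_continuous_on[OF 0]]) (auto intro: continuous_intros)
  then show ?case by simp
next
  case (Suc k)
  have "((\<lambda>z. \<phi> (fst z)) has_derivative (\<lambda>(a, b). a * deriv \<phi> (fst z) + b * 0)) (at z)"
    if "z \<in> V \<times> UNIV" for z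
  proof -
    have "(\<phi> has_derivative (*) (deriv \<phi> (fst z))) (at (fst z))"
      using smooth1_has_real_derivative[OF Suc.prems] that unfolding has_field_derivative_def by auto
    from has_derivative_compose[OF has_derivative_fst[OF has_derivative_ident] this]
    show ?thesis by (rule has_derivative_eq_rhs) (auto simp: fun_eq_iff)
  qed
  then show ?case
    by (rule Ck2_SucI[OF _ Suc.IH[OF smooth1_deriv[OF Suc.prems]] Ck2_const])
qed

lemma smooth2_fst_imp_smooth1_step:
  assumes "open V" and "smooth2 (V \<times> UNIV) (\<lambda>z. \<phi> (fst z))"
  shows "\<forall>x\<in>V. (\<phi> has_real_derivative deriv \<phi> x) (at x)"
    and "smooth2 (V \<times> UNIV) (\<lambda>z. deriv \<phi> (fst z))"
proof -
  have deriv_eq: "(\<phi> has_real_derivative da (x, y)) (at x) \<and> da (x, y) = deriv \<phi> x"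
    if "\<forall>p\<in>V \<times> UNIV. ((\<lambda>z. \<phi> (fst z)) has_derivative (\<lambda>(a, b). a * da p + b * db p)) (at p)"
      "x \<in> V" for da db x y
  proof -
    from that have "((\<lambda>z. \<phi> (fst z)) has_derivative (\<lambda>(a, b). a * da (x, y) + b * db (x, y)))
        (at (x, y))" by auto
    from has_derivative_partial_t[OF this] show ?thesis
      by (simp add: DERIV_imp_deriv)
  qed
  have "Ck2 (Suc k) (V \<times> UNIV) (\<lambda>z. \<phi> (fst z))" for k
    using assms(2) unfolding smooth2_def by blast
  then have "\<exists>da db. (\<forall>p\<in>V \<times> UNIV.
      ((\<lambda>z. \<phi> (fst z)) has_derivative (\<lambda>(a, b). a * da p + b * db p)) (at p))
      \<and> Ck2 k (V \<times> UNIV) da" for k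
    by (simp only: Ck2.simps) blast
  then obtain da :: "nat \<Rightarrow> real \<times> real \<Rightarrow> real" and db where
    d: "\<And>k. \<forall>p\<in>V \<times> UNIV.
      ((\<lambda>z. \<phi> (fst z)) has_derivative (\<lambda>(a, b). a * da k p + b * db k p)) (at p)"
    and c: "\<And>k. Ck2 k (V \<times> UNIV) (da k)"
    by metis
  show "\<forall>x\<in>V. (\<phi> has_real_derivative deriv \<phi> x) (at x)"
    using deriv_eq[OF d] by metis
  show "smooth2 (V \<times> UNIV) (\<lambda>z. deriv \<phi> (fst z))"
    unfolding smooth2_def
  proof
    fix k
    show "Ck2 k (V \<times> UNIV) (\<lambda>z. deriv \<phi> (fst z))"
      by (rule Ck2_cong[OF _ _ c[of k]]) (use assms(1) deriv_eq[OF d] in \<open>auto simp: open_Times\<close>)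
  qed
qed

lemma smooth1_iff_smooth2_fst:
  assumes "open V"
  shows "smooth1 V \<phi> \<longleftrightarrow> smooth2 (V \<times> UNIV) (\<lambda>z. \<phi> (fst z))"
proof
  assume "smooth2 (V \<times> UNIV) (\<lambda>z. \<phi> (fst z))"
  moreover have "\<forall>\<phi>. smooth2 (V \<times> UNIV) (\<lambda>z. \<phi> (fst z)) \<longrightarrow>
      (\<forall>x\<in>V. ((deriv ^^ n) \<phi> has_real_derivative (deriv ^^ Suc n) \<phi> x) (at x))" for n
  proof (induction n)
    case 0
    show ?case using smooth2_fst_imp_smooth1_step(1)[OF assms] by simp
  next
    case (Suc n)
    then show ?case
      using smooth2_fst_imp_smooth1_step(2)[OF assms]
      by (simp only: funpow_deriv_Suc[of n] funpow_deriv_Suc[of "Suc n"]) blast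
  qed
  ultimately show "smooth1 V \<phi>" unfolding smooth1_def by blast
qed (simp add: smooth2_def smooth1_imp_Ck2_fst)

lemma smooth2_subset: "S' \<subseteq> S \<Longrightarrow> smooth2 S f \<Longrightarrow> smooth2 S' f"
  unfolding smooth2_def by (blast intro: Ck2_subset)

lemma smooth2_const: "smooth2 S (\<lambda>_. c)"
  unfolding smooth2_def by (simp add: Ck2_const)

lemma smooth2_fst: "smooth2 S fst"
  unfolding smooth2_def by (simp add: Ck2_fst)

lemma smooth2_snd: "smooth2 S snd"
  unfolding smooth2_def by (simp add: Ck2_snd)

lemma smooth2_add: "smooth2 S f \<Longrightarrow> smooth2 S g \<Longrightarrow> smooth2 S (\<lambda>z. f z + g z)"
  unfolding smooth2_def by (simp add: Ck2_add)

lemma smooth2_mult: "smooth2 S f \<Longrightarrow> smooth2 S g \<Longrightarrow> smooth2 S (\<lambda>z. f z * g z)"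
  unfolding smooth2_def by (simp add: Ck2_mult)

lemma smooth2_uminus: "smooth2 S f \<Longrightarrow> smooth2 S (\<lambda>z. - f z)"
  using smooth2_mult[OF smooth2_const, of S f "- 1"] by simp

lemma smooth2_diff: "smooth2 S f \<Longrightarrow> smooth2 S g \<Longrightarrow> smooth2 S (\<lambda>z. f z - g z)"
  using smooth2_add[OF _ smooth2_uminus, of S f g] by simp

lemma smooth2_comp:
  "smooth2 S F \<Longrightarrow> smooth2 S' p \<Longrightarrow> smooth2 S' q \<Longrightarrow> (\<And>z. z \<in> S' \<Longrightarrow> (p z, q z) \<in> S) \<Longrightarrow>
    smooth2 S' (\<lambda>z. F (p z, q z))"
  unfolding smooth2_def by (blast intro: Ck2_comp)

lemma Ck2_smooth1_comp:
  "smooth1 V \<phi> \<Longrightarrow> Ck2 k S f \<Longrightarrow> (\<And>z. z \<in> S \<Longrightarrow> f z \<in> V) \<Longrightarrow> Ck2 k S (\<lambda>z. \<phi> (f z))"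
  using Ck2_comp[OF smooth1_imp_Ck2_fst, of V \<phi> k S f "\<lambda>_. 0"] Ck2_const by simp

lemma smooth2_smooth1_comp:
  "smooth1 V \<phi> \<Longrightarrow> smooth2 S f \<Longrightarrow> (\<And>z. z \<in> S \<Longrightarrow> f z \<in> V) \<Longrightarrow> smooth2 S (\<lambda>z. \<phi> (f z))"
  unfolding smooth2_def by (blast intro: Ck2_smooth1_comp)

lemma smooth1_exp: "smooth1 UNIV exp"
proof -
  have e: "deriv exp = exp" by (rule ext) (rule DERIV_imp_deriv[OF DERIV_exp])
  have pw: "(deriv ^^ n) exp = exp" for n by (induction n) (simp_all add: e)
  show ?thesis unfolding smooth1_def by (simp add: pw DERIV_exp del: funpow.simps)
qed

lemma smooth1_inverse: "smooth1 (- {0}) inverse"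
proof -
  have "{z :: real \<times> real. fst z \<noteq> 0} = (- {0}) \<times> UNIV" by auto
  with Ck2_inverse_fst have "smooth2 ((- {0}) \<times> UNIV) (\<lambda>z. inverse (fst z :: real))"
    unfolding smooth2_def by metis
  then show ?thesis by (simp add: smooth1_iff_smooth2_fst open_Compl)
qed

lemma smooth2_exp: "smooth2 S f \<Longrightarrow> smooth2 S (\<lambda>z. exp (f z))"
  by (rule smooth2_smooth1_comp[OF smooth1_exp]) auto

lemma smooth2_divide:
  assumes "smooth2 S f" "smooth2 S g" "\<And>z. z \<in> S \<Longrightarrow> g z \<noteq> 0"
  shows "smooth2 S (\<lambda>z. f z / g z)"
proof -
  have "smooth2 S (\<lambda>z. inverse (g z))"
    by (rule smooth2_smooth1_comp[OF smooth1_inverse assms(2)]) (use assms(3) in auto)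
  from smooth2_mult[OF assms(1) this] show ?thesis by (simp add: divide_inverse)
qed

lemma smooth2_fst_comp: "smooth1 V \<phi> \<Longrightarrow> (\<And>z. z \<in> S \<Longrightarrow> fst z \<in> V) \<Longrightarrow> smooth2 S (\<lambda>z. \<phi> (fst z))"
  by (rule smooth2_smooth1_comp[OF _ smooth2_fst])

lemma smooth2_snd_comp: "smooth1 V \<phi> \<Longrightarrow> (\<And>z. z \<in> S \<Longrightarrow> snd z \<in> V) \<Longrightarrow> smooth2 S (\<lambda>z. \<phi> (snd z))"
  by (rule smooth2_smooth1_comp[OF _ smooth2_snd])

lemma smooth1_const: "open V \<Longrightarrow> smooth1 V (\<lambda>_. c)"
  by (simp add: smooth1_iff_smooth2_fst smooth2_const)

lemma smooth1_id: "open V \<Longrightarrow> smooth1 V (\<lambda>x. x)"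
  by (simp add: smooth1_iff_smooth2_fst smooth2_fst)

lemma smooth1_uminus: "open V \<Longrightarrow> smooth1 V f \<Longrightarrow> smooth1 V (\<lambda>x. - f x)"
  by (simp add: smooth1_iff_smooth2_fst smooth2_uminus)

lemma smooth1_mult: "open V \<Longrightarrow> smooth1 V f \<Longrightarrow> smooth1 V g \<Longrightarrow> smooth1 V (\<lambda>x. f x * g x)"
  by (simp add: smooth1_iff_smooth2_fst smooth2_mult)

lemma smooth1_divide:
  "open V \<Longrightarrow> smooth1 V f \<Longrightarrow> smooth1 V g \<Longrightarrow> (\<And>x. x \<in> V \<Longrightarrow> g x \<noteq> 0) \<Longrightarrow>
    smooth1 V (\<lambda>x. f x / g x)"
  unfolding smooth1_iff_smooth2_fst by (rule smooth2_divide) auto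

lemma smooth1_exp_comp: "open V \<Longrightarrow> smooth1 V f \<Longrightarrow> smooth1 V (\<lambda>x. exp (f x))"
  by (simp add: smooth1_iff_smooth2_fst smooth2_exp)

section \<open>Primitives and local inverses\<close>

lemma parametric_integral_has_field_derivative_param:
  fixes G G1 G2 :: "real \<times> real \<Rightarrow> real"
  assumes box: "{a..t} \<times> X \<subseteq> S" and X: "convex X" "c \<in> X"
    and dG: "\<forall>p\<in>S. (G has_derivative (\<lambda>(x, y). x * G1 p + y * G2 p)) (at p)"
    and G2: "continuous_on S G2"
  shows "((\<lambda>x. integral {a..t} (\<lambda>s. G (s, x))) has_field_derivative
      integral {a..t} (\<lambda>s. G2 (s, c))) (at c within X)"
  unfolding cbox_interval[symmetric]
proof (rule leibniz_rule_field_derivative[OF _ _ _ X(2,1)])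
  fix x s assume "x \<in> X" "s \<in> cbox a t"
  with box have "(s, x) \<in> S" by (auto simp: cbox_interval)
  with dG have "(G has_derivative (\<lambda>(p, q). p * G1 (s, x) + q * G2 (s, x))) (at (s, x))"
    by blast
  from has_derivative_partial_x[OF this]
  show "((\<lambda>x. G (s, x)) has_field_derivative G2 (s, x)) (at x within X)"
    by (rule has_field_derivative_at_within)
next
  have G: "continuous_on S G"
    using dG by (auto intro!: continuous_at_imp_continuous_on has_derivative_continuous)
  fix x assume "x \<in> X"
  with box have "continuous_on (cbox a t) (\<lambda>s. G (s, x))"
    by (intro continuous_on_compose2[OF G]) (auto simp: cbox_interval intro!: continuous_intros)
  then show "(\<lambda>s. G (s, x)) integrable_on cbox a t"
    by (rule integrable_continuous)
next
  have "continuous_on (X \<times> cbox a t) (\<lambda>z. G2 (snd z, fst z))"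
    using box by (intro continuous_on_compose2[OF G2])
      (auto simp: cbox_interval intro!: continuous_intros)
  then show "continuous_on (X \<times> cbox a t) (\<lambda>(x, s). G2 (s, x))"
    by (simp add: case_prod_unfold)
qed

lemma has_derivative_parametric_integral:
  fixes G G1 G2 :: "real \<times> real \<Rightarrow> real"
  assumes box: "{a..b} \<times> C \<subseteq> S" and C: "open C"
    and dG: "\<forall>p\<in>S. (G has_derivative (\<lambda>(x, y). x * G1 p + y * G2 p)) (at p)"
    and G2: "continuous_on S G2"
    and t: "a < t" "t < b" and c: "c \<in> C"
  shows "((\<lambda>z. integral {a..fst z} (\<lambda>s. G (s, snd z))) has_derivative
          (\<lambda>(x, y). x * G (t, c) + y * integral {a..t} (\<lambda>s. G2 (s, c)))) (at (t, c))"
proof -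
  obtain e where e: "e > 0" "ball c e \<subseteq> C" using C c open_contains_ball by blast
  define f where "f = (\<lambda>x y. integral {a..y} (\<lambda>s. G (s, x)))"
  have G: "continuous_on S G"
    using dG by (auto intro!: continuous_at_imp_continuous_on has_derivative_continuous)
  have "((\<lambda>x. f x t) has_field_derivative integral {a..t} (\<lambda>s. G2 (s, c))) (at c within ball c e)"
    unfolding f_def using box e t
    by (intro parametric_integral_has_field_derivative_param[OF _ convex_ball _ dG G2]) auto
  then have "((\<lambda>x. f x t) has_derivative (*) (integral {a..t} (\<lambda>s. G2 (s, c)))) (at c within ball c e)"
    by (simp add: has_field_derivative_def)
  moreover have "((\<lambda>y. f x y) has_derivative blinfun_apply (blinfun_mult_left (G (y, x))))
      (at y within {a<..<b})" if "x \<in> ball c e" "y \<in> {a<..<b}" for x y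
  proof -
    have "continuous_on {a..b} (\<lambda>s. G (s, x))"
      using box e that by (intro continuous_on_compose2[OF G]) (auto intro!: continuous_intros)
    from integral_has_real_derivative[OF this, of y] that
    have "((\<lambda>y. f x y) has_real_derivative G (y, x)) (at y within {a<..<b})"
      unfolding f_def by (auto intro: DERIV_subset[of _ _ _ "{a..b}"])
    then show ?thesis
      unfolding has_field_derivative_def
      by (rule has_derivative_eq_rhs) (simp add: fun_eq_iff blinfun_mult_left.rep_eq)
  qed
  moreover have "continuous (at (c, t) within ball c e \<times> {a<..<b})
      (\<lambda>(x, y). blinfun_mult_left (G (y, x)))"
  proof -
    have "(t, c) \<in> S" using box t c by auto
    with dG have "isCont G (t, c)" by (blast intro: has_derivative_continuous)
    moreover have swap: "isCont (\<lambda>z::real \<times> real. (snd z, fst z)) (c, t)"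
      by (intro continuous_intros)
    ultimately have "isCont (\<lambda>z. G (snd z, fst z)) (c, t)"
      using isCont_o2[OF swap, of G] by simp
    then have "isCont (\<lambda>z. blinfun_mult_left (G (snd z, fst z))) (c, t)"
      by (rule isCont_o2) (rule linear_continuous_at[OF bounded_linear_blinfun_mult_left])
    then show ?thesis
      unfolding case_prod_unfold by (rule continuous_at_imp_continuous_within)
  qed
  ultimately have "((\<lambda>(x, y). f x y) has_derivative
      (\<lambda>(tx, ty). integral {a..t} (\<lambda>s. G2 (s, c)) * tx + blinfun_mult_left (G (t, c)) ty))
      (at (c, t) within ball c e \<times> {a<..<b})"
    using e t by (intro has_derivative_partialsI) auto
  moreover have "at (c, t) within ball c e \<times> {a<..<b} = at (c, t)"
    by (rule at_within_open) (use e t in \<open>auto intro: open_Times\<close>)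
  ultimately have D: "((\<lambda>(x, y). f x y) has_derivative
      (\<lambda>(tx, ty). integral {a..t} (\<lambda>s. G2 (s, c)) * tx + blinfun_mult_left (G (t, c)) ty)) (at (c, t))"
    by simp
  have "((\<lambda>z. (snd z, fst z)) has_derivative (\<lambda>z. (snd z, fst z))) (at (t, c))"
    by (intro has_derivative_Pair has_derivative_fst has_derivative_snd has_derivative_ident)
  from has_derivative_compose[OF this, of "\<lambda>(x, y). f x y", simplified, OF D]
  show ?thesis unfolding f_def
    by (rule has_derivative_eq_rhs) (auto simp: fun_eq_iff)
qed

lemma Ck2_parametric_integral:
  fixes G :: "real \<times> real \<Rightarrow> real"
  assumes box: "{a..b} \<times> C \<subseteq> S0" and C: "open C"
  shows "Ck2 (Suc (Suc k)) S0 G \<Longrightarrow>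
    Ck2 (Suc k) ({a<..<b} \<times> C) (\<lambda>z. integral {a..fst z} (\<lambda>s. G (s, snd z)))"
proof (induction k arbitrary: G)
  case 0
  from "0" obtain G1 G2 where
    dG: "\<forall>p\<in>S0. (G has_derivative (\<lambda>(x, y). x * G1 p + y * G2 p)) (at p)"
    and c1: "Ck2 (Suc 0) S0 G1" and c2: "Ck2 (Suc 0) S0 G2" by auto
  from c2 obtain G21 G22 where
    dG2: "\<forall>p\<in>S0. (G2 has_derivative (\<lambda>(x, y). x * G21 p + y * G22 p)) (at p)"
    and c22: "Ck2 0 S0 G22" by auto
  have cG2: "continuous_on S0 G2" using Ck2_SucD[OF c2] by simp
  have d: "((\<lambda>z. integral {a..fst z} (\<lambda>s. G (s, snd z))) has_derivative
          (\<lambda>(x, y). x * G p + y * integral {a..fst p} (\<lambda>s. G2 (s, snd p)))) (at p)"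
    if p: "p \<in> {a<..<b} \<times> C" for p
    using has_derivative_parametric_integral[OF box C dG cG2, of "fst p" "snd p"] p by auto
  have d2: "((\<lambda>z. integral {a..fst z} (\<lambda>s. G2 (s, snd z))) has_derivative
          (\<lambda>(x, y). x * G2 p + y * integral {a..fst p} (\<lambda>s. G22 (s, snd p)))) (at p)"
    if p: "p \<in> {a<..<b} \<times> C" for p
    using has_derivative_parametric_integral[OF box C dG2, of "fst p" "snd p"] p c22 by auto
  have "continuous_on ({a<..<b} \<times> C) (\<lambda>z. integral {a..fst z} (\<lambda>s. G2 (s, snd z)))"
    using d2 by (auto intro!: continuous_at_imp_continuous_on has_derivative_continuous)
  then have e2: "Ck2 0 ({a<..<b} \<times> C) (\<lambda>z. integral {a..fst z} (\<lambda>s. G2 (s, snd z)))" by simp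
  have e1: "Ck2 0 ({a<..<b} \<times> C) G"
    by (rule Ck2_subset[OF _ Ck2_antimono[OF _ "0"]]) (use box in auto)
  show ?case
    by (rule Ck2_SucI[OF d e1 e2])
next
  case (Suc k)
  from Suc.prems have "\<exists>G1 G2. (\<forall>p\<in>S0. (G has_derivative (\<lambda>(x, y). x * G1 p + y * G2 p)) (at p))
     \<and> Ck2 (Suc (Suc k)) S0 G1 \<and> Ck2 (Suc (Suc k)) S0 G2" by (simp only: Ck2.simps(2))
  then obtain G1 G2 where
    dG: "\<forall>p\<in>S0. (G has_derivative (\<lambda>(x, y). x * G1 p + y * G2 p)) (at p)"
    and c2: "Ck2 (Suc (Suc k)) S0 G2" by blast
  have cG2: "continuous_on S0 G2" using Ck2_antimono[OF _ c2, of 0] by simp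
  have d: "((\<lambda>z. integral {a..fst z} (\<lambda>s. G (s, snd z))) has_derivative
          (\<lambda>(x, y). x * G p + y * integral {a..fst p} (\<lambda>s. G2 (s, snd p)))) (at p)"
    if p: "p \<in> {a<..<b} \<times> C" for p
    using has_derivative_parametric_integral[OF box C dG cG2, of "fst p" "snd p"] p by auto
  have e1: "Ck2 (Suc k) ({a<..<b} \<times> C) G"
    by (rule Ck2_subset[OF _ Ck2_antimono[OF _ Suc.prems]]) (use box in auto)
  show ?case
    by (rule Ck2_SucI[OF d e1 Suc.IH[OF c2]])
qed

lemma smooth2_parametric_integral:
  fixes G :: "real \<times> real \<Rightarrow> real"
  assumes box: "{a..b} \<times> C \<subseteq> S0" and C: "open C" and G: "smooth2 S0 G"
  shows "smooth2 ({a<..<b} \<times> C) (\<lambda>z. integral {a..fst z} (\<lambda>s. G (s, snd z)))"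
  unfolding smooth2_def
proof
  fix k
  have "Ck2 (Suc k) ({a<..<b} \<times> C) (\<lambda>z. integral {a..fst z} (\<lambda>s. G (s, snd z)))"
    using Ck2_parametric_integral[OF box C] G unfolding smooth2_def by blast
  then show "Ck2 k ({a<..<b} \<times> C) (\<lambda>z. integral {a..fst z} (\<lambda>s. G (s, snd z)))"
    by (rule Ck2_SucD)
qed

lemma parametric_integral_has_real_derivative:
  fixes G :: "real \<times> real \<Rightarrow> real"
  assumes box: "{a..b} \<times> C \<subseteq> S0" and G: "continuous_on S0 G"
    and t: "a < t" "t < b" and c: "c \<in> C"
  shows "((\<lambda>s. integral {a..s} (\<lambda>s. G (s, c))) has_real_derivative G (t, c)) (at t)"
proof -
  have contGs: "continuous_on {a..b} (\<lambda>s. G (s, c))"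
    by (rule continuous_on_compose2[OF G]) (use box c in \<open>auto intro: continuous_intros\<close>)
  have "((\<lambda>u. integral {a..u} (\<lambda>s. G (s, c))) has_real_derivative G (t, c)) (at t within {a..b})"
    by (rule integral_has_real_derivative[OF contGs]) (use t in auto)
  moreover have "at t within {a..b} = at t"
    by (rule at_within_interior) (use t in auto)
  ultimately show ?thesis by simp
qed

lemma smooth2_t_primitive_exists:
  assumes "open I" "open C" "smooth2 (I \<times> C) G" "t0 \<in> I"
  obtains e K where "e > 0" "ball t0 e \<subseteq> I" "smooth2 (ball t0 e \<times> C) K"
    "\<And>t c. t \<in> ball t0 e \<Longrightarrow> c \<in> C \<Longrightarrow> ((\<lambda>s. K (s, c)) has_real_derivative G (t, c)) (at t)"
proof -
  obtain e where e: "e > 0" "ball t0 e \<subseteq> I"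
    using assms(1,4) open_contains_ball by blast
  define a where "a = t0 - e / 2"
  define b where "b = t0 + e / 2"
  have ab: "{a<..<b} = ball t0 (e / 2)"
    by (auto simp: a_def b_def ball_eq_greaterThanLessThan)
  have box: "{a..b} \<times> C \<subseteq> I \<times> C"
    using e by (force simp: a_def b_def dist_real_def)
  define K where "K = (\<lambda>z. integral {a..fst z} (\<lambda>s. G (s, snd z)))"
  show ?thesis
  proof
    show "e / 2 > 0" "ball t0 (e / 2) \<subseteq> I" using e by auto
    show "smooth2 (ball t0 (e / 2) \<times> C) K"
      unfolding K_def ab[symmetric]
      by (rule smooth2_parametric_integral[OF box assms(2,3)])
    have "continuous_on (I \<times> C) G"
      using assms(3) by (simp add: smooth2_def Ck2.simps(1)[symmetric] del: Ck2.simps)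
    then show "((\<lambda>s. K (s, c)) has_real_derivative G (t, c)) (at t)"
      if "t \<in> ball t0 (e / 2)" "c \<in> C" for t c
      using parametric_integral_has_real_derivative[OF box, of G t c] that
      unfolding K_def ab[symmetric] by auto
  qed
qed

lemma smooth2_x_primitive_exists:
  assumes "open I" "open J" "smooth2 (I \<times> J) G" "x0 \<in> J"
  obtains e K where "e > 0" "ball x0 e \<subseteq> J" "smooth2 (I \<times> ball x0 e) K"
    "\<And>t x. t \<in> I \<Longrightarrow> x \<in> ball x0 e \<Longrightarrow> ((\<lambda>s. K (t, s)) has_real_derivative G (t, x)) (at x)"
proof -
  have "smooth2 (J \<times> I) (\<lambda>z. G (snd z, fst z))"
    by (rule smooth2_comp[OF assms(3) smooth2_snd smooth2_fst]) auto
  then obtain e K where "e > 0" "ball x0 e \<subseteq> J" and K: "smooth2 (ball x0 e \<times> I) K"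
    and dK: "\<And>x t. x \<in> ball x0 e \<Longrightarrow> t \<in> I \<Longrightarrow>
      ((\<lambda>s. K (s, t)) has_real_derivative G (snd (x, t), fst (x, t))) (at x)"
    using smooth2_t_primitive_exists[OF assms(2,1) _ assms(4)] by blast
  moreover have "smooth2 (I \<times> ball x0 e) (\<lambda>z. K (snd z, fst z))"
    by (rule smooth2_comp[OF K smooth2_snd smooth2_fst]) auto
  ultimately show ?thesis
    using that[of e "\<lambda>z. K (snd z, fst z)"] by simp
qed

lemma smooth1_primitive_exists:
  assumes "open I" "smooth1 I f" "t0 \<in> I"
  obtains e F where "e > 0" "ball t0 e \<subseteq> I" "smooth1 (ball t0 e) F"
    "\<And>t. t \<in> ball t0 e \<Longrightarrow> (F has_real_derivative f t) (at t)"
proof -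
  have "smooth2 (I \<times> UNIV) (\<lambda>z. f (fst z))"
    using assms(1,2) by (simp add: smooth1_iff_smooth2_fst)
  then obtain e K where e: "e > 0" "ball t0 e \<subseteq> I" and K: "smooth2 (ball t0 e \<times> UNIV) K"
    and dK: "\<And>t c. t \<in> ball t0 e \<Longrightarrow> c \<in> UNIV \<Longrightarrow>
      ((\<lambda>s. K (s, c)) has_real_derivative f (fst (t, c))) (at t)"
    using smooth2_t_primitive_exists[OF assms(1) open_UNIV _ assms(3)] by blast
  show ?thesis
  proof
    show "smooth1 (ball t0 e) (\<lambda>t. K (t, 0))"
      using smooth2_comp[OF K smooth2_fst smooth2_const, of "ball t0 e \<times> UNIV" 0]
      by (simp add: smooth1_iff_smooth2_fst mem_Times_iff)
  qed (use e dK in auto)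
qed

lemma smooth1_exp_primitive_exists:
  assumes "open I" "smooth1 I f" "t0 \<in> I"
  obtains e E where "e > 0" "ball t0 e \<subseteq> I" "smooth1 (ball t0 e) E"
    "\<And>t. t \<in> ball t0 e \<Longrightarrow> E t > 0 \<and> (E has_real_derivative f t * E t) (at t)"
proof -
  obtain e F where "e > 0" "ball t0 e \<subseteq> I" "smooth1 (ball t0 e) F"
    and dF: "\<And>t. t \<in> ball t0 e \<Longrightarrow> (F has_real_derivative f t) (at t)"
    using smooth1_primitive_exists[OF assms] by blast
  then show ?thesis
    using that[of e "\<lambda>t. exp (F t)"] DERIV_fun_exp[OF dF]
    by (auto simp: smooth1_exp_comp mult.commute)
qed

lemma inj_on_if_deriv_nonzero:
  fixes B :: "real \<Rightarrow> real"
  assumes "is_interval J" "smooth1 J B" "\<forall>x\<in>J. deriv B x \<noteq> 0"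
  shows "inj_on B J"
proof -
  have no_equal_values: False if xy: "x \<in> J" "y \<in> J" "x < y" "B x = B y" for x y
  proof -
    have sub: "{x..y} \<subseteq> J"
      using assms(1) xy(1,2) unfolding is_interval_1 by (meson atLeastAtMost_iff subsetI)
    have "continuous_on {x..y} B"
      using smooth1_continuous_on[OF assms(2)] sub by (rule continuous_on_subset)
    moreover have "B differentiable (at z)" if "x < z" "z < y" for z
    proof -
      have "z \<in> J" using sub that by auto
      then show ?thesis
        unfolding real_differentiable_def by (blast intro: smooth1_has_real_derivative[OF assms(2)])
    qed
    ultimately obtain z where "x < z" "z < y" "DERIV B z :> 0"
      using Rolle[OF xy(3,4)] by blast
    moreover have "deriv B z \<noteq> 0"
      using assms(3) sub \<open>x < z\<close> \<open>z < y\<close> by (simp add: subset_iff)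
    ultimately show False
      using DERIV_imp_deriv by blast
  qed
  show ?thesis
  proof (rule inj_onI, rule ccontr)
    fix x y assume "x \<in> J" "y \<in> J" "B x = B y" "x \<noteq> y"
    then show False
      using no_equal_values[of x y] no_equal_values[of y x] by (metis linorder_neqE)
  qed
qed

lemma smooth1_inv_into:
  fixes B :: "real \<Rightarrow> real"
  assumes J: "open J" "is_interval J" and B: "smooth1 J B" and nz: "\<forall>x\<in>J. deriv B x \<noteq> 0"
  shows "open (B ` J)" and "smooth1 (B ` J) (inv_into J B)"
    and "\<And>x. x \<in> J \<Longrightarrow> inv_into J B (B x) = x"
proof -
  have inj: "inj_on B J" by (rule inj_on_if_deriv_nonzero[OF J(2) B nz])
  have cB: "continuous_on J B" by (rule smooth1_continuous_on[OF B])
  show W: "open (B ` J)" by (rule invariance_of_domain[OF cB J(1) inj])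
  show gB: "\<And>x. x \<in> J \<Longrightarrow> inv_into J B (B x) = x" using inj by simp
  define g where "g = inv_into J B"
  have dg: "(g has_real_derivative inverse (deriv B (g y))) (at y)" if y: "y \<in> B ` J" for y
  proof -
    obtain x where x: "x \<in> J" "y = B x" using y by auto
    have "(B has_derivative (*) (deriv B x)) (at x)"
      using smooth1_has_real_derivative[OF B x(1)] unfolding has_field_derivative_def .
    moreover have "(*) (deriv B x) \<circ> (*) (inverse (deriv B x)) = id"
      using nz x by (simp add: fun_eq_iff)
    ultimately have "(g has_derivative (*) (inverse (deriv B x))) (at (B x))"
      using has_derivative_inverse_strong[OF J(1) x(1) cB] gB by (simp add: g_def)
    then show ?thesis using x gB by (simp add: g_def has_field_derivative_def)
  qed
  have "Ck2 k (B ` J \<times> UNIV) (\<lambda>z. g (fst z))" for k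
  proof (induction k)
    case 0
    have "continuous_on (B ` J) g"
      using dg by (blast intro: continuous_at_imp_continuous_on DERIV_isCont)
    then have "continuous_on (B ` J \<times> UNIV) (\<lambda>z. g (fst z))"
      by (rule continuous_on_compose2) (auto intro: continuous_intros)
    then show ?case by simp
  next
    case (Suc k)
    have "((\<lambda>z. g (fst z)) has_derivative
        (\<lambda>(a, b). a * inverse (deriv B (g (fst z))) + b * 0)) (at z)"
      if "z \<in> B ` J \<times> UNIV" for z
    proof -
      have "(g has_derivative (*) (inverse (deriv B (g (fst z))))) (at (fst z))"
        using dg[of "fst z"] that unfolding has_field_derivative_def by auto
      from has_derivative_compose[OF has_derivative_fst[OF has_derivative_ident] this]
      show ?thesis by (rule has_derivative_eq_rhs) (auto simp: fun_eq_iff)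
    qed
    moreover have "Ck2 k (B ` J \<times> UNIV) (\<lambda>z. deriv B (g (fst z)))"
      by (rule Ck2_smooth1_comp[OF smooth1_deriv[OF B] Suc.IH]) (auto simp: g_def inv_into_into)
    then have "Ck2 k (B ` J \<times> UNIV) (\<lambda>z. inverse (deriv B (g (fst z))))"
      by (rule Ck2_smooth1_comp[OF smooth1_inverse]) (use nz in \<open>auto simp: g_def inv_into_into\<close>)
    ultimately show ?case
      by (rule Ck2_SucI[OF _ _ Ck2_const])
  qed
  then show "smooth1 (B ` J) (inv_into J B)"
    using W by (simp add: smooth1_iff_smooth2_fst smooth2_def g_def)
qed

lemma smooth1_invertible_primitive_exists:
  assumes "open J" "smooth1 J f" "\<forall>x\<in>J. f x \<noteq> 0" "x0 \<in> J"
  obtains e B where "e > 0" "ball x0 e \<subseteq> J" "smooth1 (ball x0 e) B"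
    "\<And>x. x \<in> ball x0 e \<Longrightarrow> (B has_real_derivative f x) (at x)"
    "open (B ` ball x0 e)" "smooth1 (B ` ball x0 e) (inv_into (ball x0 e) B)"
    "\<And>x. x \<in> ball x0 e \<Longrightarrow> inv_into (ball x0 e) B (B x) = x"
proof -
  obtain e B where e: "e > 0" "ball x0 e \<subseteq> J" and B: "smooth1 (ball x0 e) B"
    and dB: "\<And>x. x \<in> ball x0 e \<Longrightarrow> (B has_real_derivative f x) (at x)"
    using smooth1_primitive_exists[OF assms(1,2,4)] by blast
  have "\<forall>x\<in>ball x0 e. deriv B x \<noteq> 0"
  proof
    fix x assume "x \<in> ball x0 e"
    with dB[THEN DERIV_imp_deriv] assms(3) e(2) show "deriv B x \<noteq> 0" by auto
  qed
  from smooth1_inv_into[OF open_ball is_interval_ball_real B this] e B dB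
  show ?thesis by (intro that) auto
qed

lemma continuous_on_nonzero_ball_or_zero:
  fixes f :: "real \<Rightarrow> real"
  assumes "continuous_on S f" "open S"
  obtains t e where "e > 0" "ball t e \<subseteq> S" "\<forall>s\<in>ball t e. f s \<noteq> 0"
    | "\<forall>s\<in>S. f s = 0"
proof (cases "\<exists>t\<in>S. f t \<noteq> 0")
  case True
  then obtain t where t: "t \<in> S" "f t \<noteq> 0" by blast
  obtain e1 where "e1 > 0" "\<forall>s. dist t s < e1 \<longrightarrow> f s \<noteq> 0"
    using continuous_on_open_avoid[OF assms t] by blast
  moreover obtain e2 where "e2 > 0" "ball t e2 \<subseteq> S"
    using assms(2) t(1) open_contains_ball by blast
  moreover have "ball t (min e1 e2) \<subseteq> ball t e2" by auto
  ultimately show ?thesis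
    using that(1)[of "min e1 e2" t] by (auto simp: dist_commute)
qed (use that(2) in blast)

lemma continuous_on_local_bound:
  fixes f :: "real \<Rightarrow> real"
  assumes "continuous_on S f" "open S" "t \<in> S" "\<delta> > 0"
  obtains e where "e > 0" "ball t e \<subseteq> S" "\<forall>s\<in>ball t e. \<bar>f s - f t\<bar> < \<delta>"
proof -
  obtain e1 where "e1 > 0" "\<forall>s\<in>S. dist s t < e1 \<longrightarrow> dist (f s) (f t) < \<delta>"
    using assms(1,3,4) unfolding continuous_on_iff by blast
  moreover obtain e2 where "e2 > 0" "ball t e2 \<subseteq> S"
    using assms(2,3) open_contains_ball by blast
  moreover have "ball t (min e1 e2) \<subseteq> ball t e2" by auto
  moreover have "\<bar>f s - f t\<bar> < \<delta>" if "s \<in> ball t (min e1 e2)" for s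
  proof -
    from that \<open>ball t e2 \<subseteq> S\<close> have "s \<in> S" "dist s t < e1" by (auto simp: dist_commute)
    with \<open>\<forall>s\<in>S. dist s t < e1 \<longrightarrow> dist (f s) (f t) < \<delta>\<close> show ?thesis by (simp add: dist_real_def)
  qed
  ultimately show ?thesis
    using that[of "min e1 e2"] by auto
qed

lemma smooth1_local_normal_form:
  assumes "open I" "smooth1 I h" "t0 \<in> I"
  obtains t1 e T c \<kappa> where "e > 0" "ball t1 e \<subseteq> I" "smooth1 (ball t1 e) T"
    "\<forall>t\<in>ball t1 e. deriv T t \<noteq> 0" "c \<noteq> 0" "\<kappa> \<in> {\<lambda>s. s, \<lambda>s. 0, \<lambda>s. 1}"
    "\<forall>t\<in>ball t1 e. h t = c * \<kappa> (T t)"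
proof -
  obtain e0 where e0: "e0 > 0" "ball t0 e0 \<subseteq> I"
    using assms(1,3) open_contains_ball by blast
  have id: "smooth1 (ball t e) (\<lambda>s. s)" "\<forall>s\<in>ball t e. deriv (\<lambda>s. s) s \<noteq> 0" for t e
    by (simp_all add: smooth1_id)
  have "continuous_on (ball t0 e0) (deriv h)"
    using smooth1_continuous_on[OF smooth1_deriv[OF smooth1_subset[OF assms(2) e0(2)]]] .
  then show ?thesis
  proof (rule continuous_on_nonzero_ball_or_zero[OF _ open_ball])
    fix t1 e assume "e > 0" "ball t1 e \<subseteq> ball t0 e0" "\<forall>s\<in>ball t1 e. deriv h s \<noteq> 0"
    then show ?thesis
      using that[of e t1 h 1 "\<lambda>s. s"] e0 smooth1_subset[OF assms(2), of "ball t1 e"] by auto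
  next
    assume zero: "\<forall>s\<in>ball t0 e0. deriv h s = 0"
    have "\<exists>k. \<forall>s\<in>ball t0 e0. h s = k"
    proof (rule has_field_derivative_zero_constant)
      show "(h has_field_derivative 0) (at s within ball t0 e0)" if "s \<in> ball t0 e0" for s
        using smooth1_has_real_derivative[OF assms(2), of s] zero e0(2) that
        by (auto intro: has_field_derivative_at_within simp: subset_iff)
    qed simp
    then obtain k where k: "\<forall>s\<in>ball t0 e0. h s = k" by blast
    show ?thesis
    proof (cases "k = 0")
      case True
      then show ?thesis
        using that[of e0 t0 "\<lambda>s. s" 1 "\<lambda>s. 0"] e0 k id by auto
    next
      case False
      then show ?thesis
        using that[of e0 t0 "\<lambda>s. s" k "\<lambda>s. 1"] e0 k id by auto
    qed
  qed
qed

section \<open>The transport equation and a linear equation in x\<close>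

text \<open>In the characteristic coordinates (t, B(x) - A(t)), where A' = 1/\<tau> and B' = 1/\<xi>,
  the transport operator \<tau> d/dt + \<xi> d/dx becomes \<tau> d/dt.\<close>

lemma transport_along_characteristics:
  assumes K: "(K has_derivative (\<lambda>(a, b). a * Kt + b * Kc)) (at (t, B x - A t))"
    and A: "(A has_real_derivative 1 / \<tau> t) (at t)" and B: "(B has_real_derivative 1 / \<xi> x) (at x)"
    and "\<tau> t \<noteq> 0" "\<xi> x \<noteq> 0"
  shows "\<tau> t * pd_t (\<lambda>z. K (fst z, B (snd z) - A (fst z))) (t, x)
       + \<xi> x * pd_x (\<lambda>z. K (fst z, B (snd z) - A (fst z))) (t, x) = \<tau> t * Kt"
proof -
  have "((\<lambda>z. (fst z, B (snd z) - A (fst z))) has_derivative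
      (\<lambda>v. (fst v, snd v / \<xi> x - fst v / \<tau> t))) (at (t, x))"
    using has_derivative_compose[OF has_derivative_snd[OF has_derivative_ident, of "at (t, x)"], of B]
      has_derivative_compose[OF has_derivative_fst[OF has_derivative_ident, of "at (t, x)"], of A]
      A B unfolding has_field_derivative_def
    by (auto intro!: has_derivative_Pair has_derivative_diff[THEN has_derivative_eq_rhs]
        has_derivative_fst[OF has_derivative_ident] simp: fun_eq_iff)
  moreover have "(K has_derivative (\<lambda>(a, b). a * Kt + b * Kc))
      (at ((\<lambda>z. (fst z, B (snd z) - A (fst z))) (t, x)))"
    using K by simp
  ultimately have "((\<lambda>z. K (fst z, B (snd z) - A (fst z))) has_derivative
      (\<lambda>v. (\<lambda>(a, b). a * Kt + b * Kc) (fst v, snd v / \<xi> x - fst v / \<tau> t))) (at (t, x))"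
    by (rule has_derivative_compose)
  then have "((\<lambda>z. K (fst z, B (snd z) - A (fst z))) has_derivative
      (\<lambda>(a, b). a * (Kt - Kc / \<tau> t) + b * (Kc / \<xi> x))) (at (t, x))"
    by (rule has_derivative_eq_rhs) (auto simp: fun_eq_iff field_simps)
  from pd_t_eqI[OF this] pd_x_eqI[OF this] show ?thesis
    using assms(4,5) by (simp add: field_simps)
qed

lemma characteristic_neighbourhoods_exist:
  fixes A B :: "real \<Rightarrow> real"
  assumes A: "continuous_on (ball t0 eA) A" "eA > 0" and B: "continuous_on (ball x0 eB) B" "eB > 0"
    and W: "open W" "B x0 \<in> W"
  obtains \<eta>A \<eta>B C where "\<eta>A > 0" "ball t0 \<eta>A \<subseteq> ball t0 eA" "\<eta>B > 0" "ball x0 \<eta>B \<subseteq> ball x0 eB"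
    "open C" "\<And>t c. t \<in> ball t0 \<eta>A \<Longrightarrow> c \<in> C \<Longrightarrow> c + A t \<in> W"
    "\<And>t x. t \<in> ball t0 \<eta>A \<Longrightarrow> x \<in> ball x0 \<eta>B \<Longrightarrow> B x - A t \<in> C"
proof -
  obtain \<delta> where \<delta>: "\<delta> > 0" "ball (B x0) \<delta> \<subseteq> W"
    using open_contains_ball_eq[OF W(1)] W(2) by blast
  obtain \<eta>A where \<eta>A: "\<eta>A > 0" "ball t0 \<eta>A \<subseteq> ball t0 eA" "\<forall>t\<in>ball t0 \<eta>A. \<bar>A t - A t0\<bar> < \<delta> / 4"
    using continuous_on_local_bound[OF A(1) open_ball, of t0 "\<delta> / 4"] A(2) \<delta>(1) by auto
  obtain \<eta>B where \<eta>B: "\<eta>B > 0" "ball x0 \<eta>B \<subseteq> ball x0 eB" "\<forall>x\<in>ball x0 \<eta>B. \<bar>B x - B x0\<bar> < \<delta> / 4"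
    using continuous_on_local_bound[OF B(1) open_ball, of x0 "\<delta> / 4"] B(2) \<delta>(1) by auto
  show ?thesis
  proof (rule that[OF \<eta>A(1,2) \<eta>B(1,2) open_ball[of "B x0 - A t0" "\<delta> / 2"]])
    fix t c assume "t \<in> ball t0 \<eta>A" "c \<in> ball (B x0 - A t0) (\<delta> / 2)"
    then have "\<bar>A t - A t0\<bar> < \<delta> / 4" "\<bar>c - (B x0 - A t0)\<bar> < \<delta> / 2"
      using \<eta>A(3) by (auto simp: dist_real_def abs_minus_commute)
    then have "c + A t \<in> ball (B x0) \<delta>"
      unfolding mem_ball dist_real_def abs_less_iff by linarith
    then show "c + A t \<in> W" using \<delta>(2) by blast
  next
    fix t x assume "t \<in> ball t0 \<eta>A" "x \<in> ball x0 \<eta>B"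
    then have "\<bar>A t - A t0\<bar> < \<delta> / 4" "\<bar>B x - B x0\<bar> < \<delta> / 4"
      using \<eta>A(3) \<eta>B(3) by auto
    then show "B x - A t \<in> ball (B x0 - A t0) (\<delta> / 2)"
      unfolding mem_ball dist_real_def abs_less_iff by linarith
  qed
qed

lemma transport_equation_local_solution:
  assumes I: "open I" "t0 \<in> I" and J: "open J" "x0 \<in> J"
    and \<tau>: "smooth1 I \<tau>" "\<forall>t\<in>I. \<tau> t \<noteq> 0" and \<xi>: "smooth1 J \<xi>" "\<forall>x\<in>J. \<xi> x \<noteq> 0"
    and F: "smooth2 (I \<times> J) F"
  obtains e1 e2 Y where "e1 > 0" "e2 > 0" "ball t0 e1 \<subseteq> I" "ball x0 e2 \<subseteq> J"
    "smooth2 (ball t0 e1 \<times> ball x0 e2) Y"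
    "\<And>t x. t \<in> ball t0 e1 \<Longrightarrow> x \<in> ball x0 e2 \<Longrightarrow>
      \<tau> t * pd_t Y (t, x) + \<xi> x * pd_x Y (t, x) = F (t, x)"
proof -
  have "smooth1 I (\<lambda>t. 1 / \<tau> t)" "smooth1 J (\<lambda>x. 1 / \<xi> x)" "\<forall>x\<in>J. 1 / \<xi> x \<noteq> 0"
    using smooth1_divide[OF I(1) smooth1_const[OF I(1)] \<tau>(1)]
      smooth1_divide[OF J(1) smooth1_const[OF J(1)] \<xi>(1)] \<tau>(2) \<xi>(2) by auto
  obtain eA A where eA: "eA > 0" "ball t0 eA \<subseteq> I" and sA: "smooth1 (ball t0 eA) A"
    and dA: "\<And>t. t \<in> ball t0 eA \<Longrightarrow> (A has_real_derivative 1 / \<tau> t) (at t)"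
    using smooth1_primitive_exists[OF I(1) _ I(2)] \<open>smooth1 I (\<lambda>t. 1 / \<tau> t)\<close> by blast
  obtain eB B where eB: "eB > 0" "ball x0 eB \<subseteq> J" and sB: "smooth1 (ball x0 eB) B"
    and dB: "\<And>x. x \<in> ball x0 eB \<Longrightarrow> (B has_real_derivative 1 / \<xi> x) (at x)"
    and W: "open (B ` ball x0 eB)" and sBinv: "smooth1 (B ` ball x0 eB) (inv_into (ball x0 eB) B)"
    and BinvB: "\<And>x. x \<in> ball x0 eB \<Longrightarrow> inv_into (ball x0 eB) B (B x) = x"
    using smooth1_invertible_primitive_exists[OF J(1) \<open>smooth1 J (\<lambda>x. 1 / \<xi> x)\<close> _ J(2)]
      \<open>\<forall>x\<in>J. 1 / \<xi> x \<noteq> 0\<close> by blast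
  define Binv where "Binv = inv_into (ball x0 eB) B"
  obtain \<eta>A \<eta>B C where \<eta>A: "\<eta>A > 0" "ball t0 \<eta>A \<subseteq> ball t0 eA"
    and \<eta>B: "\<eta>B > 0" "ball x0 \<eta>B \<subseteq> ball x0 eB" and C: "open C"
    and in_range: "\<And>t c. t \<in> ball t0 \<eta>A \<Longrightarrow> c \<in> C \<Longrightarrow> c + A t \<in> B ` ball x0 eB"
    and in_C: "\<And>t x. t \<in> ball t0 \<eta>A \<Longrightarrow> x \<in> ball x0 \<eta>B \<Longrightarrow> B x - A t \<in> C"
    by (rule characteristic_neighbourhoods_exist[OF smooth1_continuous_on[OF sA] eA(1)
          smooth1_continuous_on[OF sB] eB(1) W]) (use eB(1) in auto)
  define G where "G = (\<lambda>z. F (fst z, Binv (snd z + A (fst z))) / \<tau> (fst z))"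
  have "smooth2 (ball t0 \<eta>A \<times> C) G"
    unfolding G_def
  proof (intro smooth2_divide smooth2_comp[OF F smooth2_fst]
      smooth2_smooth1_comp[OF sBinv[folded Binv_def]] smooth2_add smooth2_snd
      smooth2_fst_comp[OF sA] smooth2_fst_comp[OF \<tau>(1)])
    fix z assume z: "z \<in> ball t0 \<eta>A \<times> C"
    then have "fst z \<in> ball t0 eA" and range: "snd z + A (fst z) \<in> B ` ball x0 eB"
      using in_range[of "fst z" "snd z"] \<eta>A(2) by auto
    moreover have "Binv (snd z + A (fst z)) \<in> ball x0 eB"
      unfolding Binv_def using range by (rule inv_into_into)
    ultimately
    show "snd z + A (fst z) \<in> B ` ball x0 eB" "fst z \<in> ball t0 eA" "fst z \<in> I" "\<tau> (fst z) \<noteq> 0"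
      "(fst z, Binv (snd z + A (fst z))) \<in> I \<times> J"
      using eA(2) eB(2) \<tau>(2) by auto
  qed
  then obtain e1 K where e1: "e1 > 0" "ball t0 e1 \<subseteq> ball t0 \<eta>A" and sK: "smooth2 (ball t0 e1 \<times> C) K"
    and dK: "\<And>t c. t \<in> ball t0 e1 \<Longrightarrow> c \<in> C \<Longrightarrow> ((\<lambda>s. K (s, c)) has_real_derivative G (t, c)) (at t)"
    using smooth2_t_primitive_exists[OF open_ball C _ centre_in_ball[THEN iffD2, OF \<eta>A(1)]] by blast
  define Y where "Y = (\<lambda>z. K (fst z, B (snd z) - A (fst z)))"
  show ?thesis
  proof (rule that[of e1 \<eta>B Y])
    show "ball t0 e1 \<subseteq> I" "ball x0 \<eta>B \<subseteq> J"
      using e1(2) \<eta>A(2) eA(2) \<eta>B(2) eB(2) by auto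
    show "smooth2 (ball t0 e1 \<times> ball x0 \<eta>B) Y"
      unfolding Y_def
      by (intro smooth2_comp[OF sK smooth2_fst] smooth2_diff smooth2_snd_comp[OF sB]
          smooth2_fst_comp[OF sA]) (use in_C e1(2) \<eta>A(2) \<eta>B(2) in auto)
    fix t x assume t: "t \<in> ball t0 e1" and x: "x \<in> ball x0 \<eta>B"
    have tA: "t \<in> ball t0 eA" and xB: "x \<in> ball x0 eB"
      using t x e1(2) \<eta>A(2) \<eta>B(2) by blast+
    have c: "B x - A t \<in> C"
      using t x e1(2) by (intro in_C) blast+
    have "(K has_derivative (\<lambda>(a, b). a * pd_t K (t, B x - A t) + b * pd_x K (t, B x - A t)))
        (at (t, B x - A t))"
      using smooth2_has_derivative[OF sK] t c by blast
    then have "\<tau> t * pd_t Y (t, x) + \<xi> x * pd_x Y (t, x) = \<tau> t * pd_t K (t, B x - A t)"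
      unfolding Y_def
      using transport_along_characteristics[where K = K and A = A and B = B and t = t and x = x]
        dA[OF tA] dB[OF xB] tA xB eA(2) eB(2) \<tau>(2) \<xi>(2) by blast
    also have "pd_t K (t, B x - A t) = G (t, B x - A t)"
      using dK[OF t c] by (simp add: pd_t_def DERIV_imp_deriv)
    also have "\<tau> t * G (t, B x - A t) = F (t, x)"
      using tA eA(2) \<tau>(2) by (auto simp: G_def Binv_def BinvB[OF xB])
    finally show "\<tau> t * pd_t Y (t, x) + \<xi> x * pd_x Y (t, x) = F (t, x)" .
  qed (use e1 \<eta>B in auto)
qed

lemma linear_x_equation_local_solution:
  assumes I: "open I" and J: "open J" "x0 \<in> J"
    and \<xi>: "smooth1 J \<xi>" "\<forall>x\<in>J. \<xi> x \<noteq> 0" and a: "smooth1 I a" and F: "smooth2 (I \<times> J) F"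
  obtains e Y where "e > 0" "ball x0 e \<subseteq> J" "smooth2 (I \<times> ball x0 e) Y"
    "\<And>t x. t \<in> I \<Longrightarrow> x \<in> ball x0 e \<Longrightarrow> \<xi> x * pd_x Y (t, x) = a t * Y (t, x) + F (t, x)"
proof -
  have "smooth1 J (\<lambda>x. 1 / \<xi> x)"
    using smooth1_divide[OF J(1) smooth1_const[OF J(1)] \<xi>(1)] \<xi>(2) by auto
  then obtain eB B where eB: "eB > 0" "ball x0 eB \<subseteq> J" and sB: "smooth1 (ball x0 eB) B"
    and dB: "\<And>x. x \<in> ball x0 eB \<Longrightarrow> (B has_real_derivative 1 / \<xi> x) (at x)"
    using smooth1_primitive_exists[OF J(1) _ J(2)] by blast
  define G where "G = (\<lambda>z. exp (- a (fst z) * B (snd z)) * F z / \<xi> (snd z))"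
  have "smooth2 (I \<times> ball x0 eB) G"
    unfolding G_def using eB(2) \<xi>(2)
    by (intro smooth2_divide smooth2_mult smooth2_exp smooth2_uminus smooth2_fst_comp[OF a]
        smooth2_snd_comp[OF sB] smooth2_snd_comp[OF \<xi>(1)] smooth2_subset[OF _ F]) auto
  then obtain e K where e: "e > 0" "ball x0 e \<subseteq> ball x0 eB" and sK: "smooth2 (I \<times> ball x0 e) K"
    and dK: "\<And>t x. t \<in> I \<Longrightarrow> x \<in> ball x0 e \<Longrightarrow> ((\<lambda>s. K (t, s)) has_real_derivative G (t, x)) (at x)"
    using smooth2_x_primitive_exists[OF I open_ball _ centre_in_ball[THEN iffD2, OF eB(1)]] by blast
  define Y where "Y = (\<lambda>z. exp (a (fst z) * B (snd z)) * K z)"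
  show ?thesis
  proof (rule that[of e Y])
    show "ball x0 e \<subseteq> J" using e(2) eB(2) by blast
    show "smooth2 (I \<times> ball x0 e) Y"
      unfolding Y_def using e(2)
      by (intro smooth2_mult smooth2_exp smooth2_fst_comp[OF a] smooth2_snd_comp[OF sB] sK) auto
    fix t x assume t: "t \<in> I" and x: "x \<in> ball x0 e"
    have xB: "x \<in> ball x0 eB" and "\<xi> x \<noteq> 0" using x e(2) eB(2) \<xi>(2) by blast+
    have "((\<lambda>s. Y (t, s)) has_real_derivative
        exp (a t * B x) * (a t * (1 / \<xi> x)) * K (t, x) + exp (a t * B x) * G (t, x)) (at x)"
      unfolding Y_def
      by (auto intro!: derivative_eq_intros dB[OF xB] dK[OF t x])
    then have "pd_x Y (t, x) =
        exp (a t * B x) * (a t * (1 / \<xi> x)) * K (t, x) + exp (a t * B x) * G (t, x)"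
      by (simp add: pd_x_def DERIV_imp_deriv)
    with \<open>\<xi> x \<noteq> 0\<close> show "\<xi> x * pd_x Y (t, x) = a t * Y (t, x) + F (t, x)"
      by (simp add: Y_def G_def field_simps exp_minus)
  qed (use e in auto)
qed

section \<open>Changes of variables of the first kind\<close>

definition first_kind ::
  "(real \<Rightarrow> real) \<Rightarrow> (real \<Rightarrow> real) \<Rightarrow> (real \<Rightarrow> real) \<Rightarrow> (real \<times> real \<Rightarrow> real) \<Rightarrow> R3 \<Rightarrow> R3" where
  "first_kind T X U Y = (\<lambda>(t, x, u). (T t, X x, U t * u + Y (t, x)))"

lemma cv_first_first_kind:
  "smooth1 I T \<Longrightarrow> smooth1 J X \<Longrightarrow> smooth1 I U \<Longrightarrow> smooth2 (I \<times> J) Y \<Longrightarrow>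
    \<forall>t\<in>I. deriv T t \<noteq> 0 \<and> U t \<noteq> 0 \<Longrightarrow> \<forall>x\<in>J. deriv X x \<noteq> 0 \<Longrightarrow>
    cv_first I J (first_kind T X U Y)"
  unfolding cv_first_def first_kind_def by blast

lemma pushes_to_first_kind:
  assumes T: "smooth1 I T" and X: "smooth1 J X" and U: "smooth1 I U" and Y: "smooth2 (I \<times> J) Y"
    and P: "\<And>t x u. t \<in> I \<Longrightarrow> x \<in> J \<Longrightarrow> P (T t, X x, U t * u + Y (t, x)) =
       (deriv T t * \<tau> t, deriv X x * \<xi> x,
        deriv U t * \<tau> t * u + U t * (h t * u + r (t, x)) + pd_t Y (t, x) * \<tau> t + pd_x Y (t, x) * \<xi> x)"
  shows "pushes_to (first_kind T X U Y) (I \<times> J \<times> UNIV) (Qfield \<tau> \<xi> h r) P"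
  unfolding pushes_to_def
proof
  fix p :: R3 assume "p \<in> I \<times> J \<times> UNIV"
  then obtain t x u where p: "p = (t, x, u)" and t: "t \<in> I" and x: "x \<in> J" by auto
  have fst: "((\<lambda>q::R3. fst q) has_derivative fst) (at p)"
    and fst_snd: "((\<lambda>q::R3. fst (snd q)) has_derivative (\<lambda>v. fst (snd v))) (at p)"
    and snd_snd: "((\<lambda>q::R3. snd (snd q)) has_derivative (\<lambda>v. snd (snd v))) (at p)"
    by (auto intro!: derivative_eq_intros)
  have dT: "(T has_derivative (*) (deriv T t)) (at (fst p))"
    and dX: "(X has_derivative (*) (deriv X x)) (at (fst (snd p)))"
    and dU: "(U has_derivative (*) (deriv U t)) (at (fst p))"
    using smooth1_has_real_derivative[OF T t] smooth1_has_real_derivative[OF X x]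
      smooth1_has_real_derivative[OF U t]
    by (simp_all add: p has_field_derivative_def)
  have dY: "(Y has_derivative (\<lambda>(a, b). a * pd_t Y (t, x) + b * pd_x Y (t, x)))
      (at (fst p, fst (snd p)))"
    using smooth2_has_derivative[OF Y] t x by (simp add: p)
  have "(first_kind T X U Y has_derivative (\<lambda>v. (deriv T t * fst v, deriv X x * fst (snd v),
      U t * snd (snd v) + deriv U t * fst v * u + (fst v * pd_t Y (t, x) + fst (snd v) * pd_x Y (t, x)))))
      (at p)"
  proof -
    have "first_kind T X U Y =
        (\<lambda>q. (T (fst q), X (fst (snd q)), U (fst q) * snd (snd q) + Y (fst q, fst (snd q))))"
      by (auto simp: first_kind_def)
    moreover have "((\<lambda>q. (T (fst q), X (fst (snd q)), U (fst q) * snd (snd q) + Y (fst q, fst (snd q))))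
      has_derivative (\<lambda>v. (deriv T t * fst v, deriv X x * fst (snd v),
        (U (fst p) * snd (snd v) + deriv U t * fst v * snd (snd p))
        + (\<lambda>(a, b). a * pd_t Y (t, x) + b * pd_x Y (t, x)) (fst v, fst (snd v))))) (at p)"
      by (intro has_derivative_Pair has_derivative_add has_derivative_mult snd_snd
          has_derivative_compose[OF fst dT] has_derivative_compose[OF fst_snd dX]
          has_derivative_compose[OF fst dU]
          has_derivative_compose[OF has_derivative_Pair[OF fst fst_snd] dY])
    ultimately show ?thesis
      by (simp add: p)
  qed
  moreover have "(\<lambda>v. (deriv T t * fst v, deriv X x * fst (snd v),
      U t * snd (snd v) + deriv U t * fst v * u + (fst v * pd_t Y (t, x) + fst (snd v) * pd_x Y (t, x))))
      (Qfield \<tau> \<xi> h r p) = P (first_kind T X U Y p)"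
    using P[OF t x, of u] by (simp add: p Qfield_def first_kind_def algebra_simps)
  ultimately show "\<exists>D. (first_kind T X U Y has_derivative D) (at p) \<and>
      D (Qfield \<tau> \<xi> h r p) = P (first_kind T X U Y p)" by blast
qed

definition canonical_reducible :: "(real \<times> real \<Rightarrow> real) \<Rightarrow> real set \<Rightarrow> real set \<Rightarrow> (R3 \<Rightarrow> R3) \<Rightarrow> bool" where
  "canonical_reducible g I0 J0 Q \<longleftrightarrow>
     (\<exists>I J \<phi>. open I \<and> open J \<and> I \<noteq> {} \<and> J \<noteq> {} \<and> I \<subseteq> I0 \<and> J \<subseteq> J0
        \<and> is_interval I \<and> is_interval J
        \<and> (cv_first I J \<phi> \<or> cv_second g I J \<phi>)
        \<and> (\<exists>c. c \<noteq> 0 \<and>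
             ((\<exists>P\<in>canonical_list. pushes_to \<phi> (I \<times> J \<times> UNIV) Q (\<lambda>q. c *\<^sub>R P q))
              \<or> (\<exists>s :: real \<times> real \<Rightarrow> real.
                   (\<exists>q\<in>\<phi> ` (I \<times> J \<times> UNIV). s (fst q, fst (snd q)) \<noteq> 0)
                   \<and> pushes_to \<phi> (I \<times> J \<times> UNIV) Q (\<lambda>(t, x, u). c *\<^sub>R (0, 0, s (t, x)))))))"

lemma canonical_reducible_mono:
  "canonical_reducible g I J Q \<Longrightarrow> I \<subseteq> I0 \<Longrightarrow> J \<subseteq> J0 \<Longrightarrow> canonical_reducible g I0 J0 Q"
  unfolding canonical_reducible_def by (meson order_trans)

lemma canonical_reducible_ballI:
  assumes "e1 > 0" "e2 > 0" "ball t1 e1 \<subseteq> I0" "ball x1 e2 \<subseteq> J0"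
    and "cv_first (ball t1 e1) (ball x1 e2) \<phi>" "c \<noteq> 0"
    and "(\<exists>P\<in>canonical_list. pushes_to \<phi> (ball t1 e1 \<times> ball x1 e2 \<times> UNIV) Q (\<lambda>q. c *\<^sub>R P q))
      \<or> (\<exists>s :: real \<times> real \<Rightarrow> real.
           (\<exists>q\<in>\<phi> ` (ball t1 e1 \<times> ball x1 e2 \<times> UNIV). s (fst q, fst (snd q)) \<noteq> 0)
           \<and> pushes_to \<phi> (ball t1 e1 \<times> ball x1 e2 \<times> UNIV) Q (\<lambda>(t, x, u). c *\<^sub>R (0, 0, s (t, x))))"
  shows "canonical_reducible g I0 J0 Q"
  unfolding canonical_reducible_def
  by (rule exI[of _ "ball t1 e1"], rule exI[of _ "ball x1 e2"], rule exI[of _ \<phi>],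
      intro conjI exI[of _ c]) (use assms in \<open>auto simp: is_interval_ball_real\<close>)

lemma canonical_reducible_first_kindI:
  assumes "e1 > 0" "e2 > 0" "ball t1 e1 \<subseteq> I0" "ball x1 e2 \<subseteq> J0"
    and T: "smooth1 (ball t1 e1) T" and X: "smooth1 (ball x1 e2) X" and U: "smooth1 (ball t1 e1) U"
    and Y: "smooth2 (ball t1 e1 \<times> ball x1 e2) Y"
    and "\<forall>t\<in>ball t1 e1. deriv T t \<noteq> 0 \<and> U t \<noteq> 0" "\<forall>x\<in>ball x1 e2. deriv X x \<noteq> 0"
    and "c \<noteq> 0" "P \<in> canonical_list"
    and "\<And>t x u. t \<in> ball t1 e1 \<Longrightarrow> x \<in> ball x1 e2 \<Longrightarrow> c *\<^sub>R P (T t, X x, U t * u + Y (t, x)) =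
       (deriv T t * \<tau> t, deriv X x * \<xi> x,
        deriv U t * \<tau> t * u + U t * (h t * u + r (t, x)) + pd_t Y (t, x) * \<tau> t + pd_x Y (t, x) * \<xi> x)"
  shows "canonical_reducible g I0 J0 (Qfield \<tau> \<xi> h r)"
proof -
  have "cv_first (ball t1 e1) (ball x1 e2) (first_kind T X U Y)"
    using assms(9,10) by (rule cv_first_first_kind[OF T X U Y])
  moreover have "pushes_to (first_kind T X U Y) (ball t1 e1 \<times> ball x1 e2 \<times> UNIV) (Qfield \<tau> \<xi> h r)
      (\<lambda>q. c *\<^sub>R P q)"
    using assms(13) by (rule pushes_to_first_kind[OF T X U Y])
  ultimately show ?thesis
    using assms(12) by (intro canonical_reducible_ballI[OF assms(1-4) _ assms(11)]) auto
qed

section \<open>Reduction to canonical form\<close>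

locale symmetry_field =
  fixes \<tau> \<xi> h :: "real \<Rightarrow> real" and r :: "real \<times> real \<Rightarrow> real" and I J :: "real set"
  assumes open_I: "open I" and open_J: "open J"
    and smooth_tau: "smooth1 I \<tau>" and smooth_xi: "smooth1 J \<xi>" and smooth_h: "smooth1 I h"
    and smooth_r: "smooth2 (I \<times> J) r"

begin

lemma restrict_domain:
  "open I' \<Longrightarrow> open J' \<Longrightarrow> I' \<subseteq> I \<Longrightarrow> J' \<subseteq> J \<Longrightarrow> symmetry_field \<tau> \<xi> h r I' J'"
  by unfold_locales
    (auto intro: smooth1_subset[OF smooth_tau] smooth1_subset[OF smooth_xi] smooth1_subset[OF smooth_h]
      smooth2_subset[OF _ smooth_r])

lemma smooth1_divide_tau:
  assumes "\<forall>t\<in>I. \<tau> t \<noteq> 0"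
  shows "smooth1 I (\<lambda>t. - h t / \<tau> t)" "smooth1 I (\<lambda>t. 1 / \<tau> t)"
  using smooth1_divide[OF open_I smooth1_uminus[OF open_I smooth_h] smooth_tau]
    smooth1_divide[OF open_I smooth1_const[OF open_I] smooth_tau] assms by auto

lemma canonical_reducible_tau_xi_nonvanish:
  assumes "t0 \<in> I" "x0 \<in> J" "\<forall>t\<in>I. \<tau> t \<noteq> 0" "\<forall>x\<in>J. \<xi> x \<noteq> 0"
  shows "canonical_reducible g I J (Qfield \<tau> \<xi> h r)"
proof -
  obtain eU U where eU: "eU > 0" "ball t0 eU \<subseteq> I" and sU: "smooth1 (ball t0 eU) U"
    and dU: "\<And>t. t \<in> ball t0 eU \<Longrightarrow> U t > 0 \<and> (U has_real_derivative - h t / \<tau> t * U t) (at t)"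
    using smooth1_exp_primitive_exists[OF open_I smooth1_divide_tau(1)[OF assms(3)] assms(1)]
    by blast
  obtain eT T where eT: "eT > 0" "ball t0 eT \<subseteq> ball t0 eU" and sT: "smooth1 (ball t0 eT) T"
    and dT: "\<And>t. t \<in> ball t0 eT \<Longrightarrow> T t > 0 \<and> (T has_real_derivative 1 / \<tau> t * T t) (at t)"
    using smooth1_exp_primitive_exists[OF open_ball smooth1_subset[OF smooth1_divide_tau(2)[OF assms(3)]]
        centre_in_ball[THEN iffD2, OF eU(1)]] eU(2) by blast
  have "smooth1 J (\<lambda>x. 1 / \<xi> x)"
    using smooth1_divide[OF open_J smooth1_const[OF open_J] smooth_xi] assms(4) by auto
  then obtain eX X where eX: "eX > 0" "ball x0 eX \<subseteq> J" and sX: "smooth1 (ball x0 eX) X"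
    and dX: "\<And>x. x \<in> ball x0 eX \<Longrightarrow> X x > 0 \<and> (X has_real_derivative 1 / \<xi> x * X x) (at x)"
    using smooth1_exp_primitive_exists[OF open_J _ assms(2)] by blast
  have subI: "ball t0 eT \<subseteq> I" and subJ: "ball x0 eX \<subseteq> J" using eT(2) eU(2) eX(2) by blast+
  define F where "F = (\<lambda>z. - U (fst z) * r z)"
  have "smooth2 (ball t0 eT \<times> ball x0 eX) F"
    unfolding F_def using subI subJ
    by (intro smooth2_mult smooth2_uminus smooth2_subset[OF _ smooth_r]
        smooth2_fst_comp[OF smooth1_subset[OF sU eT(2)]]) auto
  moreover have "\<forall>t\<in>ball t0 eT. \<tau> t \<noteq> 0" "\<forall>x\<in>ball x0 eX. \<xi> x \<noteq> 0"
    using subI subJ assms(3,4) by blast+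
  ultimately obtain e1 e2 Y
    where e: "e1 > 0" "e2 > 0" "ball t0 e1 \<subseteq> ball t0 eT" "ball x0 e2 \<subseteq> ball x0 eX"
    and sY: "smooth2 (ball t0 e1 \<times> ball x0 e2) Y"
    and dY: "\<And>t x. t \<in> ball t0 e1 \<Longrightarrow> x \<in> ball x0 e2 \<Longrightarrow>
      \<tau> t * pd_t Y (t, x) + \<xi> x * pd_x Y (t, x) = F (t, x)"
    using transport_equation_local_solution[OF open_ball centre_in_ball[THEN iffD2, OF eT(1)]
        open_ball centre_in_ball[THEN iffD2, OF eX(1)] smooth1_subset[OF smooth_tau subI] _
        smooth1_subset[OF smooth_xi subJ]]
    by blast
  have P: "(\<lambda>(t, x, u). (t, x, 0)) \<in> canonical_list" by (simp add: canonical_list_def)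
  have subU: "ball t0 e1 \<subseteq> ball t0 eU" using e(3) eT(2) by blast
  show ?thesis
  proof (rule canonical_reducible_first_kindI[OF e(1,2) _ _ smooth1_subset[OF sT e(3)]
        smooth1_subset[OF sX e(4)] smooth1_subset[OF sU subU] sY _ _ one_neq_zero P])
    show "ball t0 e1 \<subseteq> I" "ball x0 e2 \<subseteq> J" using subU eU(2) e(4) eX(2) by blast+
    show "\<forall>t\<in>ball t0 e1. deriv T t \<noteq> 0 \<and> U t \<noteq> 0"
      using dT[THEN conjunct2, THEN DERIV_imp_deriv] dT dU e(3) subU eU(2) assms(3) by fastforce
    show "\<forall>x\<in>ball x0 e2. deriv X x \<noteq> 0"
      using dX[THEN conjunct2, THEN DERIV_imp_deriv] dX e(4) eX(2) assms(4) by fastforce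
    fix t x u assume t: "t \<in> ball t0 e1" and x: "x \<in> ball x0 e2"
    then have "t \<in> ball t0 eT" "t \<in> ball t0 eU" "x \<in> ball x0 eX" "t \<in> I" "x \<in> J"
      using e(3,4) subU eU(2) eX(2) by blast+
    with dT dU dX assms(3,4)
    have "deriv T t = 1 / \<tau> t * T t" "deriv U t = - h t / \<tau> t * U t" "deriv X x = 1 / \<xi> x * X x"
      "\<tau> t \<noteq> 0" "\<xi> x \<noteq> 0"
      by (auto intro: DERIV_imp_deriv)
    with dY[OF t x]
    show "1 *\<^sub>R (case (T t, X x, U t * u + Y (t, x)) of (t, x, u) \<Rightarrow> (t, x, 0)) =
      (deriv T t * \<tau> t, deriv X x * \<xi> x,
       deriv U t * \<tau> t * u + U t * (h t * u + r (t, x)) + pd_t Y (t, x) * \<tau> t + pd_x Y (t, x) * \<xi> x)"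
      by (simp add: F_def field_simps)
  qed
qed

lemma canonical_reducible_xi_vanish:
  assumes "t0 \<in> I" "x0 \<in> J" "\<forall>t\<in>I. \<tau> t \<noteq> 0" "\<forall>x\<in>J. \<xi> x = 0"
  shows "canonical_reducible g I J (Qfield \<tau> \<xi> h r)"
proof -
  obtain eU U where eU: "eU > 0" "ball t0 eU \<subseteq> I" and sU: "smooth1 (ball t0 eU) U"
    and dU: "\<And>t. t \<in> ball t0 eU \<Longrightarrow> U t > 0 \<and> (U has_real_derivative - h t / \<tau> t * U t) (at t)"
    using smooth1_exp_primitive_exists[OF open_I smooth1_divide_tau(1)[OF assms(3)] assms(1)]
    by blast
  obtain eT T where eT: "eT > 0" "ball t0 eT \<subseteq> ball t0 eU" and sT: "smooth1 (ball t0 eT) T"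
    and dT: "\<And>t. t \<in> ball t0 eT \<Longrightarrow> (T has_real_derivative 1 / \<tau> t) (at t)"
    using smooth1_primitive_exists[OF open_ball smooth1_subset[OF smooth1_divide_tau(2)[OF assms(3)]]
        centre_in_ball[THEN iffD2, OF eU(1)]] eU(2) by blast
  obtain eJ where eJ: "eJ > 0" "ball x0 eJ \<subseteq> J"
    using open_J assms(2) open_contains_ball by blast
  define G where "G = (\<lambda>z. - U (fst z) * r z / \<tau> (fst z))"
  have "smooth2 (ball t0 eT \<times> ball x0 eJ) G"
  proof -
    have "ball t0 eT \<times> ball x0 eJ \<subseteq> I \<times> J" using eT(2) eU(2) eJ(2) by blast
    with assms(3) show ?thesis
      unfolding G_def
      by (intro smooth2_divide smooth2_mult smooth2_uminus smooth2_subset[OF _ smooth_r]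
          smooth2_fst_comp[OF smooth1_subset[OF sU eT(2)]] smooth2_fst_comp[OF smooth_tau]) auto
  qed
  then obtain e1 Y where e1: "e1 > 0" "ball t0 e1 \<subseteq> ball t0 eT"
    and sY: "smooth2 (ball t0 e1 \<times> ball x0 eJ) Y"
    and dY: "\<And>t x. t \<in> ball t0 e1 \<Longrightarrow> x \<in> ball x0 eJ \<Longrightarrow>
      ((\<lambda>s. Y (s, x)) has_real_derivative G (t, x)) (at t)"
    using smooth2_t_primitive_exists[OF open_ball open_ball _ centre_in_ball[THEN iffD2, OF eT(1)]]
    by blast
  have P: "(\<lambda>(t, x, u). (1, 0, 0)) \<in> canonical_list" by (simp add: canonical_list_def)
  have sub: "ball t0 e1 \<subseteq> ball t0 eU" using e1(2) eT(2) by blast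
  show ?thesis
  proof (rule canonical_reducible_first_kindI[OF e1(1) eJ(1) _ eJ(2) smooth1_subset[OF sT e1(2)]
        smooth1_id[OF open_ball] smooth1_subset[OF sU sub] sY _ _ one_neq_zero P])
    show "ball t0 e1 \<subseteq> I" using sub eU(2) by blast
    show "\<forall>t\<in>ball t0 e1. deriv T t \<noteq> 0 \<and> U t \<noteq> 0"
      using dT[THEN DERIV_imp_deriv] dU e1(2) sub assms(3) eU(2) by fastforce
    fix t x u assume t: "t \<in> ball t0 e1" and x: "x \<in> ball x0 eJ"
    then have "t \<in> ball t0 eT" "t \<in> ball t0 eU" "t \<in> I" "x \<in> J"
      using e1(2) sub eU(2) eJ(2) by blast+
    with dT dU dY[OF t x] assms(3,4)
    have "deriv T t = 1 / \<tau> t" "deriv U t = - h t / \<tau> t * U t" "pd_t Y (t, x) = G (t, x)"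
      "\<tau> t \<noteq> 0" "\<xi> x = 0"
      by (auto simp: pd_t_def DERIV_imp_deriv)
    then show "1 *\<^sub>R (case (T t, x, U t * u + Y (t, x)) of (t, x, u) \<Rightarrow> (1, 0, 0)) =
      (deriv T t * \<tau> t, deriv (\<lambda>x. x) x * \<xi> x,
       deriv U t * \<tau> t * u + U t * (h t * u + r (t, x)) + pd_t Y (t, x) * \<tau> t + pd_x Y (t, x) * \<xi> x)"
      by (simp add: G_def field_simps)
  qed (simp add: deriv_ident)
qed

lemma canonical_reducible_tau_vanish:
  assumes "t0 \<in> I" "x0 \<in> J" "\<forall>t\<in>I. \<tau> t = 0" "\<forall>x\<in>J. \<xi> x \<noteq> 0"
  shows "canonical_reducible g I J (Qfield \<tau> \<xi> h r)"
proof -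
  obtain t1 e1 T c \<kappa> where e1: "e1 > 0" "ball t1 e1 \<subseteq> I" and T: "smooth1 (ball t1 e1) T"
    "\<forall>t\<in>ball t1 e1. deriv T t \<noteq> 0" and c: "c \<noteq> 0" and \<kappa>: "\<kappa> \<in> {\<lambda>s. s, \<lambda>s. 0, \<lambda>s. 1}"
    and hT: "\<forall>t\<in>ball t1 e1. h t = c * \<kappa> (T t)"
    by (rule smooth1_local_normal_form[OF open_I smooth_h assms(1)])
  from \<kappa> have P: "(\<lambda>(t, x, u). (0, 1, \<kappa> t * u)) \<in> canonical_list"
    by (auto simp: canonical_list_def)
  have "smooth1 J (\<lambda>x. 1 / \<xi> x)"
    using smooth1_divide[OF open_J smooth1_const[OF open_J] smooth_xi] assms(4) by auto
  then obtain eB B where eB: "eB > 0" "ball x0 eB \<subseteq> J" and sB: "smooth1 (ball x0 eB) B"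
    and dB: "\<And>x. x \<in> ball x0 eB \<Longrightarrow> (B has_real_derivative 1 / \<xi> x) (at x)"
    using smooth1_primitive_exists[OF open_J _ assms(2)] by blast
  have "smooth2 (ball t1 e1 \<times> ball x0 eB) (\<lambda>z. - r z)"
    using e1(2) eB(2) by (intro smooth2_uminus smooth2_subset[OF _ smooth_r]) blast
  moreover have "\<forall>x\<in>ball x0 eB. \<xi> x \<noteq> 0" using assms(4) eB(2) by blast
  ultimately obtain e2 Y where e2: "e2 > 0" "ball x0 e2 \<subseteq> ball x0 eB"
    and Y: "smooth2 (ball t1 e1 \<times> ball x0 e2) Y"
    and dY: "\<And>t x. t \<in> ball t1 e1 \<Longrightarrow> x \<in> ball x0 e2 \<Longrightarrow>
      \<xi> x * pd_x Y (t, x) = h t * Y (t, x) + - r (t, x)"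
    using linear_x_equation_local_solution[OF open_ball open_ball centre_in_ball[THEN iffD2, OF eB(1)]
        smooth1_subset[OF smooth_xi eB(2)] _ smooth1_subset[OF smooth_h e1(2)]]
    by blast
  have X: "smooth1 (ball x0 e2) (\<lambda>x. c * B x)"
    using smooth1_subset[OF sB e2(2)] by (simp add: smooth1_mult smooth1_const)
  have dX: "deriv (\<lambda>x. c * B x) x = c / \<xi> x" if "x \<in> ball x0 e2" for x
  proof -
    have "x \<in> ball x0 eB" using that e2(2) by blast
    from DERIV_cmult[OF dB[OF this], of c] show ?thesis by (simp add: DERIV_imp_deriv)
  qed
  show ?thesis
  proof (rule canonical_reducible_first_kindI[OF e1(1) e2(1) e1(2) _ T(1) X
        smooth1_const[OF open_ball] Y _ _ c P])
    show "ball x0 e2 \<subseteq> J" using e2(2) eB(2) by blast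
    show "\<forall>x\<in>ball x0 e2. deriv (\<lambda>x. c * B x) x \<noteq> 0"
      using dX c assms(4) e2(2) eB(2) by auto
    fix t x u assume t: "t \<in> ball t1 e1" and x: "x \<in> ball x0 e2"
    then have "t \<in> I" "x \<in> J" using e1(2) e2(2) eB(2) by blast+
    with hT t assms(3,4) have "h t = c * \<kappa> (T t)" "\<tau> t = 0" "\<xi> x \<noteq> 0" by auto
    with dX[OF x] dY[OF t x]
    show "c *\<^sub>R (case (T t, c * B x, 1 * u + Y (t, x)) of (t, x, u) \<Rightarrow> (0, 1, \<kappa> t * u)) =
      (deriv T t * \<tau> t, deriv (\<lambda>x. c * B x) x * \<xi> x,
       deriv (\<lambda>_. 1) t * \<tau> t * u + 1 * (h t * u + r (t, x)) + pd_t Y (t, x) * \<tau> t + pd_x Y (t, x) * \<xi> x)"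
      by (simp add: field_simps)
  qed (simp_all add: T(2) deriv_ident)
qed

lemma canonical_reducible_tau_xi_vanish:
  assumes "t0 \<in> I" "x0 \<in> J" "\<forall>t\<in>I. \<tau> t = 0 \<and> h t \<noteq> 0" "\<forall>x\<in>J. \<xi> x = 0"
  shows "canonical_reducible g I J (Qfield \<tau> \<xi> h r)"
proof -
  obtain t1 e1 T c \<kappa> where e1: "e1 > 0" "ball t1 e1 \<subseteq> I" and T: "smooth1 (ball t1 e1) T"
    "\<forall>t\<in>ball t1 e1. deriv T t \<noteq> 0" and c: "c \<noteq> 0" and \<kappa>: "\<kappa> \<in> {\<lambda>s. s, \<lambda>s. 0, \<lambda>s. 1}"
    and hT: "\<forall>t\<in>ball t1 e1. h t = c * \<kappa> (T t)"
    by (rule smooth1_local_normal_form[OF open_I smooth_h assms(1)])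
  obtain e2 where e2: "e2 > 0" "ball x0 e2 \<subseteq> J"
    using open_J assms(2) open_contains_ball by blast
  have "h t1 \<noteq> 0" using assms(3) e1 centre_in_ball[of t1 e1] by blast
  with hT e1(1) have "\<kappa> \<noteq> (\<lambda>s. 0)" by auto
  with \<kappa> have P: "(\<lambda>(t, x, u). (0, 0, \<kappa> t * u)) \<in> canonical_list"
    by (auto simp: canonical_list_def)
  define Y where "Y = (\<lambda>z. r z / h (fst z))"
  have "smooth2 (ball t1 e1 \<times> ball x0 e2) r"
    using e1(2) e2(2) by (intro smooth2_subset[OF _ smooth_r]) blast
  moreover have "smooth2 (ball t1 e1 \<times> ball x0 e2) (\<lambda>z. h (fst z))"
    using e1(2) by (intro smooth2_fst_comp[OF smooth_h]) auto
  ultimately have "smooth2 (ball t1 e1 \<times> ball x0 e2) Y"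
    unfolding Y_def using e1(2) assms(3) by (intro smooth2_divide) auto
  then show ?thesis
  proof (rule canonical_reducible_first_kindI[OF e1(1) e2(1) e1(2) e2(2) T(1)
        smooth1_id[OF open_ball] smooth1_const[OF open_ball] _ _ _ c P])
    fix t x u assume t: "t \<in> ball t1 e1" and x: "x \<in> ball x0 e2"
    then have "t \<in> I" "x \<in> J" using e1(2) e2(2) by blast+
    with hT t assms(3,4) have "h t = c * \<kappa> (T t)" "h t \<noteq> 0" "\<tau> t = 0" "\<xi> x = 0"
      by auto
    then show "c *\<^sub>R (case (T t, x, 1 * u + Y (t, x)) of (t, x, u) \<Rightarrow> (0, 0, \<kappa> t * u)) =
      (deriv T t * \<tau> t, deriv (\<lambda>x. x) x * \<xi> x,
       deriv (\<lambda>_. 1) t * \<tau> t * u + 1 * (h t * u + r (t, x)) + pd_t Y (t, x) * \<tau> t + pd_x Y (t, x) * \<xi> x)"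
      by (simp add: Y_def field_simps)
  qed (simp_all add: T(2) deriv_ident)
qed

lemma canonical_reducible_tau_xi_h_vanish:
  assumes "t0 \<in> I" "x0 \<in> J" "r (t0, x0) \<noteq> 0" "\<forall>t\<in>I. \<tau> t = 0 \<and> h t = 0" "\<forall>x\<in>J. \<xi> x = 0"
  shows "canonical_reducible g I J (Qfield \<tau> \<xi> h r)"
proof -
  obtain e1 e2 where e: "e1 > 0" "ball t0 e1 \<subseteq> I" "e2 > 0" "ball x0 e2 \<subseteq> J"
    using open_I open_J assms(1,2) open_contains_ball by meson
  define \<phi> where "\<phi> = first_kind (\<lambda>t. t) (\<lambda>x. x) (\<lambda>_. 1) (\<lambda>_. 0)"
  have "cv_first (ball t0 e1) (ball x0 e2) \<phi>"
    unfolding \<phi>_def by (intro cv_first_first_kind smooth1_id smooth1_const smooth2_const open_ball) auto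
  moreover have "pushes_to \<phi> (ball t0 e1 \<times> ball x0 e2 \<times> UNIV) (Qfield \<tau> \<xi> h r)
      (\<lambda>(t, x, u). 1 *\<^sub>R (0, 0, r (t, x)))"
    unfolding \<phi>_def
    by (rule pushes_to_first_kind[OF smooth1_id smooth1_id smooth1_const smooth2_const])
      (use assms(4,5) e in \<open>auto simp: pd_t_def pd_x_def subset_iff\<close>)
  moreover have "(t0, x0, 0) \<in> \<phi> ` (ball t0 e1 \<times> ball x0 e2 \<times> UNIV)"
    by (rule image_eqI[of _ _ "(t0, x0, 0)"]) (use e in \<open>simp_all add: \<phi>_def first_kind_def\<close>)
  ultimately show ?thesis
    using assms(3)
    by (intro canonical_reducible_ballI[OF e(1,3,2,4), of \<phi> 1] disjI2 exI[of _ r] conjI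
        bexI[of _ "(t0, x0, 0)"]) auto
qed

lemma canonical_reducible_if_nonzero:
  assumes "t0 \<in> I" "x0 \<in> J" "Qfield \<tau> \<xi> h r (t0, x0, u0) \<noteq> 0"
  shows "canonical_reducible g I J (Qfield \<tau> \<xi> h r)"
proof (rule continuous_on_nonzero_ball_or_zero[OF smooth1_continuous_on[OF smooth_tau] open_I])
  fix t1 e1 assume t1: "e1 > 0" "ball t1 e1 \<subseteq> I" "\<forall>t\<in>ball t1 e1. \<tau> t \<noteq> 0"
  show ?thesis
  proof (rule continuous_on_nonzero_ball_or_zero[OF smooth1_continuous_on[OF smooth_xi] open_J])
    fix x1 e2 assume x1: "e2 > 0" "ball x1 e2 \<subseteq> J" "\<forall>x\<in>ball x1 e2. \<xi> x \<noteq> 0"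
    have "canonical_reducible g (ball t1 e1) (ball x1 e2) (Qfield \<tau> \<xi> h r)"
      using symmetry_field.canonical_reducible_tau_xi_nonvanish
        [OF restrict_domain[OF open_ball open_ball t1(2) x1(2)], of t1 x1] t1 x1 by simp
    then show ?thesis using t1(2) x1(2) by (rule canonical_reducible_mono)
  next
    assume "\<forall>x\<in>J. \<xi> x = 0"
    then have "canonical_reducible g (ball t1 e1) J (Qfield \<tau> \<xi> h r)"
      using symmetry_field.canonical_reducible_xi_vanish
        [OF restrict_domain[OF open_ball open_J t1(2) order_refl], of t1 x0] t1 assms(2) by simp
    then show ?thesis using t1(2) by (rule canonical_reducible_mono) simp
  qed
next
  assume \<tau>: "\<forall>t\<in>I. \<tau> t = 0"
  show ?thesis
  proof (rule continuous_on_nonzero_ball_or_zero[OF smooth1_continuous_on[OF smooth_xi] open_J])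
    fix x1 e2 assume x1: "e2 > 0" "ball x1 e2 \<subseteq> J" "\<forall>x\<in>ball x1 e2. \<xi> x \<noteq> 0"
    have "canonical_reducible g I (ball x1 e2) (Qfield \<tau> \<xi> h r)"
      using symmetry_field.canonical_reducible_tau_vanish
        [OF restrict_domain[OF open_I open_ball order_refl x1(2)], of t0 x1] x1 assms(1) \<tau> by simp
    then show ?thesis using x1(2) by (rule canonical_reducible_mono[OF _ order_refl])
  next
    assume \<xi>: "\<forall>x\<in>J. \<xi> x = 0"
    show ?thesis
    proof (rule continuous_on_nonzero_ball_or_zero[OF smooth1_continuous_on[OF smooth_h] open_I])
      fix t1 e1 assume t1: "e1 > 0" "ball t1 e1 \<subseteq> I" "\<forall>t\<in>ball t1 e1. h t \<noteq> 0"
      have "canonical_reducible g (ball t1 e1) J (Qfield \<tau> \<xi> h r)"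
        using symmetry_field.canonical_reducible_tau_xi_vanish
          [OF restrict_domain[OF open_ball open_J t1(2) order_refl], of t1 x0] t1 assms(2) \<tau> \<xi>
        by (simp add: subset_iff)
      then show ?thesis using t1(2) by (rule canonical_reducible_mono) simp
    next
      assume "\<forall>t\<in>I. h t = 0"
      with assms \<tau> \<xi> have "r (t0, x0) \<noteq> 0" by (simp add: Qfield_def zero_prod_def)
      with assms(1,2) \<tau> \<xi> \<open>\<forall>t\<in>I. h t = 0\<close> show ?thesis
        by (intro canonical_reducible_tau_xi_h_vanish) auto
    qed
  qed
qed

end

theorem theorem3:
  fixes \<tau> \<xi> h :: "real \<Rightarrow> real"
    and r g :: "real \<times> real \<Rightarrow> real"
    and I0 J0 :: "real set"
  assumes "open I0" and "open J0"
    and "smooth1 I0 \<tau>" and "smooth1 J0 \<xi>" and "smooth1 I0 h"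
    and "smooth2 (I0 \<times> J0) r"
    and "smooth2 (I0 \<times> J0) g" and "\<forall>p\<in>I0 \<times> J0. pd_x g p \<noteq> 0"
    and "\<exists>p\<in>I0 \<times> J0 \<times> UNIV. Qfield \<tau> \<xi> h r p \<noteq> 0"
  shows "\<exists>I J \<phi>. open I \<and> open J \<and> I \<noteq> {} \<and> J \<noteq> {} \<and> I \<subseteq> I0 \<and> J \<subseteq> J0
           \<and> is_interval I \<and> is_interval J
           \<and> (cv_first I J \<phi> \<or> cv_second g I J \<phi>)
           \<and> (\<exists>c. c \<noteq> 0 \<and>
                ((\<exists>P\<in>canonical_list.
                    pushes_to \<phi> (I \<times> J \<times> UNIV) (Qfield \<tau> \<xi> h r) (\<lambda>q. c *\<^sub>R P q))
                 \<or> (\<exists>s :: real \<times> real \<Rightarrow> real.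
                      (\<exists>q\<in>\<phi> ` (I \<times> J \<times> UNIV). s (fst q, fst (snd q)) \<noteq> 0)
                      \<and> pushes_to \<phi> (I \<times> J \<times> UNIV) (Qfield \<tau> \<xi> h r)
                           (\<lambda>(t, x, u). c *\<^sub>R (0, 0, s (t, x))))))"
proof -
  interpret symmetry_field \<tau> \<xi> h r I0 J0
    using assms(1-6) by unfold_locales
  obtain t0 x0 u0 where "t0 \<in> I0" "x0 \<in> J0" "Qfield \<tau> \<xi> h r (t0, x0, u0) \<noteq> 0"
    using assms(9) by auto
  then have "canonical_reducible g I0 J0 (Qfield \<tau> \<xi> h r)"
    by (rule canonical_reducible_if_nonzero)
  then show ?thesis
    unfolding canonical_reducible_def .
qed

end
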